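(* Under the standing model below, with $0\le\phi<1$, the bias of the IID-resampled backtested variance of the rolling-window mean-variance portfolio rule equals $$\mathrm{bias}(\hat\sigma_p^{*2})=\sigma_p^{*2}-\sigma_p^2=-\frac{1}{\gamma^2}\left[(\theta^2+1)\frac{\sigma_\mu^2}{\sigma_R^2}B_{n,\phi}+\frac{\sigma_\mu^2}{\sigma_R^2}A_{n,\phi}\left(\frac{\sigma_\mu^2}{\sigma_R^2}A_{n,\phi}+2\theta^2\right)\right],$$ and, with $C=3\theta^2+\psi+1$, it satisfies $$-\frac{C}{\gamma^2}\,\psi\;\le\;\mathrm{bias}(\hat\sigma_p^{*2})\;\le\;0.$$
   Context: Standing model (single risky asset, risk-free rate zero). Let $0\le\phi<1$, $\mu_0\in\mathbb R$, $\sigma_\eta^2\ge 0$, $\sigma_\epsilon^2>0$. Let $(\eta_t)_{t\in\mathbb Z}$ be i.i.d. $N(0,\sigma_\eta^2)$ and $(\epsilon_t)_{t\in\mathbb Z}$ be i.i.d. $N(0,\sigma_\epsilon^2)$, the two sequences mutually independent. Let $(\mu_t)$ be the stationary solution of $\mu_t=\mu_0+\phi\mu_{t-1}+\eta_t$, and set the return $R_t=\mu_t+\epsilon_t$. Write $\sigma_\mu^2=\mathrm{Var}(\mu_t)=\sigma_\eta^2/(1-\phi^2)$, $\sigma_R^2=\mathrm{Var}(R_t)=\sigma_\mu^2+\sigma_\epsilon^2$, $\mu=\mathbb E[R_t]=\mu_0/(1-\phi)$, $\theta=\mu/\sigma_R$ (the asset's Sharpe ratio) and $\psi=\mathrm{Corr}(R_t,R_{t+1})$.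 The variance $\sigma_R^2$ is treated as known. Fix an integer window size $n\ge1$ and risk aversion $\gamma>0$. The portfolio rule uses the rolling mean $\hat\mu_t=\frac1n\sum_{i=t-n+1}^{t}R_i$ and weight $w_t=\hat\mu_t/(\gamma\sigma_R^2)$; its out-of-sample return is $R_{p,t+1}=w_tR_{t+1}$, with $\mu_p=\mathbb E[R_{p,t+1}]$ and $\sigma_p^2=\mathrm{Var}(R_{p,t+1})$. The IID-resampled counterpart: let $(R^*_t)$ be i.i.d. with the same marginal distribution $N(\mu,\sigma_R^2)$ as $R_t$, let $\hat\mu^*_t=\frac1n\sum_{i=t-n+1}^tR^*_i$, $w^*_t=\hat\mu^*_t/(\gamma\sigma_R^2)$, $R^*_{p,t+1}=w^*_tR^*_{t+1}$, $\mu_p^*=\mathbb E[R^*_{p,t+1}]$, $\sigma_p^{*2}=\mathrm{Var}(R^*_{p,t+1})$. Define $\mathrm{bias}(\hat\mu_p^* )=\mu_p^*-\mu_p$ and $\mathrm{bias}(\hat\sigma_p^{*2})=\sigma_p^{*2}-\sigma_p^2$. Define $A_{n,\phi}=\frac1n\sum_{k=1}^n\phi^k$ and $B_{n,\phi}=\frac1{n^2}\sum_{i=1}^n\sum_{j=1,j\ne i}^n\phi^{|i-j|}$. *)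

theory Defs
  imports "HOL-Probability.Probability"
begin

definition gaussian_rv :: "'a measure \<Rightarrow> ('a \<Rightarrow> real) \<Rightarrow> real \<Rightarrow> real \<Rightarrow> bool" where
  "gaussian_rv M X m v \<longleftrightarrow> X \<in> borel_measurable M \<and> v \<ge> 0 \<and>
     (if v > 0 then distributed M lborel X (normal_density m (sqrt v))
      else (AE x in M. X x = m))"

definition A_coef :: "nat \<Rightarrow> real \<Rightarrow> real" where
  "A_coef n \<phi> = (1 / real n) * (\<Sum>k=1..n. \<phi> ^ k)"

definition B_coef :: "nat \<Rightarrow> real \<Rightarrow> real" where
  "B_coef n \<phi> = (1 / (real n)^2) * (\<Sum>i=1..n. \<Sum>j\<in>{1..n} - {i}. \<phi> ^ (nat \<bar>int i - int j\<bar>))"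

definition roll_mean :: "nat \<Rightarrow> (int \<Rightarrow> 'a \<Rightarrow> real) \<Rightarrow> int \<Rightarrow> 'a \<Rightarrow> real" where
  "roll_mean n R t x = (1 / real n) * (\<Sum>i\<in>{t - int n + 1..t}. R i x)"

definition port_ret :: "nat \<Rightarrow> real \<Rightarrow> real \<Rightarrow> (int \<Rightarrow> 'a \<Rightarrow> real) \<Rightarrow> int \<Rightarrow> 'a \<Rightarrow> real" where
  "port_ret n \<gamma> sR2 R t x = (roll_mean n R t x / (\<gamma> * sR2)) * R (t + 1) x"

definition corr :: "'a measure \<Rightarrow> ('a \<Rightarrow> real) \<Rightarrow> ('a \<Rightarrow> real) \<Rightarrow> real" where
  "corr M X Y = (prob_space.expectation M (\<lambda>x. X x * Y x)
                   - prob_space.expectation M X * prob_space.expectation M Y)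
                / sqrt (prob_space.variance M X * prob_space.variance M Y)"

end

theory Submission
  imports Defs
begin

text \<open>
  Write U_t = mu_t - mu for the centred state. Unrolling the recursion k steps gives
  U_t = sum_{j<k} phi^j eta_{t-j} + phi^k U_{t-k}; as U_{t-k} has the law of U_t by
  stationarity, the remainder tends to zero in probability, so U_t is almost surely the
  moving average sum_j phi^j eta_{t-j}. On a window of n + 1 dates the centred returns are
  therefore linear combinations of finitely many independent centred Gaussians (the moving
  average at the first date, the later eta's and the eps's), with covariances
  sigma_mu^2 phi^|k-l| + sigma_eps^2 [k = l].

  The variance of a product only involves moments up to order four, and for jointly
  Gaussian centred A, B the identity E(A^2 B^2) = E(A^2) E(B^2) + 2 E(AB)^2 follows from the
  fourth moments of A + B and A - B. This gives Var((a + A)(b + B)) in closed form; applied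
  to the rolling sum and the next return, and to their iid counterparts, the two variances
  differ by the stated expression. The bounds then follow from 0 <= A_{n,phi}, B_{n,phi} <= phi
  and psi = phi sigma_mu^2 / sigma_R^2.
\<close>

section \<open>Random variables with Gaussian moments up to order four\<close>

lemma abs_power_mult_le:
  fixes a b :: real
  assumes "i + j \<le> 4"
  shows "\<bar>a ^ i * b ^ j\<bar> \<le> 1 + a ^ 4 + b ^ 4"
proof -
  define m where "m = max \<bar>a\<bar> \<bar>b\<bar>"
  have m0: "m \<ge> 0" by (simp add: m_def)
  have "\<bar>a ^ i * b ^ j\<bar> = \<bar>a\<bar> ^ i * \<bar>b\<bar> ^ j" by (simp add: abs_mult power_abs)
  also have "\<dots> \<le> m ^ i * m ^ j"
    by (intro mult_mono power_mono) (auto simp: m_def)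
  also have "\<dots> = m ^ (i + j)" by (simp add: power_add)
  also have "\<dots> \<le> 1 + m ^ 4"
  proof (cases "m \<le> 1")
    case True
    then have "m ^ (i + j) \<le> 1" using m0 by (simp add: power_le_one)
    then show ?thesis using m0 by (smt (verit) zero_le_power)
  next
    case False
    then have "m ^ (i + j) \<le> m ^ 4" using assms by (intro power_increasing) auto
    then show ?thesis by simp
  qed
  also have "m ^ 4 \<le> a ^ 4 + b ^ 4"
  proof -
    have "m ^ 4 = a ^ 4 \<or> m ^ 4 = b ^ 4"
      unfolding m_def by (auto simp: max_def power_even_abs_numeral)
    moreover have "a ^ 4 \<ge> 0" "b ^ 4 \<ge> 0" by (simp_all add: zero_le_even_power)
    ultimately show ?thesis by linarith
  qed
  finally show ?thesis by simp
qed

lemma eq_limit_of_dist_le: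
  fixes c :: real
  assumes "\<And>k. \<bar>c - x k\<bar> \<le> b k" "b \<longlonglongrightarrow> 0" "x \<longlonglongrightarrow> L"
  shows "c = L"
proof -
  have "(\<lambda>k. c - x k) \<longlonglongrightarrow> 0"
    by (rule Lim_null_comparison[OF _ assms(2)]) (use assms(1) in auto)
  then have "(\<lambda>k. c - (c - x k)) \<longlonglongrightarrow> c - 0" by (intro tendsto_intros)
  then have "x \<longlonglongrightarrow> c" by simp
  then show ?thesis using assms(3) LIMSEQ_unique by blast
qed

lemma abs_cube_le: "\<bar>(q::real)^3\<bar> \<le> q^2 + q^4"
proof (cases "\<bar>q\<bar> \<le> 1")
  case True
  have "\<bar>q^3\<bar> = \<bar>q\<bar> * q^2" by (simp add: power_abs eval_nat_numeral abs_mult)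
  also have "\<dots> \<le> 1 * q^2" using True by (intro mult_right_mono) auto
  finally show ?thesis by (simp add: zero_le_even_power add_increasing2)
next
  case False
  have "\<bar>q^3\<bar> = \<bar>q\<bar> ^ 3" by (simp add: power_abs)
  also have "\<dots> \<le> \<bar>q\<bar> ^ 4" using False by (intro power_increasing) auto
  finally show ?thesis by (simp add: power_even_abs_numeral add_increasing)
qed

context prob_space begin

text \<open>Unlike Gaussianity itself, these moment identities pass directly to independent sums
  and to L^4-limits, which is all the argument needs.\<close>

definition gaussian_moments :: "('a \<Rightarrow> real) \<Rightarrow> bool" where
  "gaussian_moments L \<longleftrightarrow> L \<in> borel_measurable M \<and> integrable M (\<lambda>x. L x ^ 4) \<and> expectation L = 0
     \<and> expectation (\<lambda>x. L x ^ 3) = 0 \<and> expectation (\<lambda>x. L x ^ 4) = 3 * (expectation (\<lambda>x. L x ^ 2))^2"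

lemma integrable_power_le_4:
  fixes L :: "'a \<Rightarrow> real"
  assumes "L \<in> borel_measurable M" "integrable M (\<lambda>x. L x ^ 4)" "k \<le> 4"
  shows "integrable M (\<lambda>x. L x ^ k)"
proof (rule Bochner_Integration.integrable_bound[where f="\<lambda>x. 1 + L x ^ 4"])
  show "integrable M (\<lambda>x. 1 + L x ^ 4)" using assms by auto
  show "(\<lambda>x. L x ^ k) \<in> borel_measurable M" using assms by auto
  show "AE x in M. norm (L x ^ k) \<le> norm (1 + L x ^ 4)"
  proof (rule AE_I2)
    fix x
    have "\<bar>L x\<bar> ^ k \<le> 1 + \<bar>L x\<bar> ^ 4"
    proof (cases "\<bar>L x\<bar> \<le> 1")
      case True
      then have "\<bar>L x\<bar> ^ k \<le> 1" by (simp add: power_le_one)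
      then show ?thesis by (smt (verit) zero_le_power abs_ge_zero)
    next
      case False
      then have "\<bar>L x\<bar> ^ k \<le> \<bar>L x\<bar> ^ 4" using assms(3) by (intro power_increasing) auto
      then show ?thesis by simp
    qed
    moreover have "\<bar>L x\<bar>^4 = L x ^ 4" by (simp add: power_even_abs_numeral)
    ultimately show "norm (L x ^ k) \<le> norm (1 + L x ^ 4)" by (simp add: power_abs)
  qed
qed

lemma gaussian_moments_integrable_power:
  fixes L :: "'a \<Rightarrow> real"
  assumes "gaussian_moments L" "k \<le> 4" shows "integrable M (\<lambda>x. L x ^ k)"
  using assms integrable_power_le_4 unfolding gaussian_moments_def by blast

lemma indep_var_power_mult:
  fixes L X :: "'a \<Rightarrow> real"
  assumes ind: "indep_var borel L borel X" and iL: "integrable M (\<lambda>x. L x ^ a)"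
    and iX: "integrable M (\<lambda>x. X x ^ b)"
  shows "integrable M (\<lambda>x. L x ^ a * X x ^ b)"
    and "expectation (\<lambda>x. L x ^ a * X x ^ b) = expectation (\<lambda>x. L x ^ a) * expectation (\<lambda>x. X x ^ b)"
proof -
  have "indep_var borel ((\<lambda>y. y ^ a) \<circ> L) borel ((\<lambda>y. y ^ b) \<circ> X)"
    by (rule indep_var_compose[OF ind]) auto
  then have i: "indep_var borel (\<lambda>x. L x ^ a) borel (\<lambda>x. X x ^ b)" by (simp add: comp_def)
  show "integrable M (\<lambda>x. L x ^ a * X x ^ b)" by (rule indep_var_integrable[OF i iL iX])
  show "expectation (\<lambda>x. L x ^ a * X x ^ b) = expectation (\<lambda>x. L x ^ a) * expectation (\<lambda>x. X x ^ b)"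
    by (rule indep_var_lebesgue_integral[OF i iL iX])
qed

lemma indep_var_add_power:
  fixes L X :: "'a \<Rightarrow> real"
  assumes ind: "indep_var borel L borel X"
    and iL: "\<And>i. i \<le> k \<Longrightarrow> integrable M (\<lambda>x. L x ^ i)"
    and iX: "\<And>i. i \<le> k \<Longrightarrow> integrable M (\<lambda>x. X x ^ i)"
  shows "integrable M (\<lambda>x. (L x + X x) ^ k)"
    and "expectation (\<lambda>x. (L x + X x) ^ k) = (\<Sum>i\<le>k. real (k choose i) *
           expectation (\<lambda>x. L x ^ i) * expectation (\<lambda>x. X x ^ (k - i)))"
proof -
  have binom: "(\<lambda>x. (L x + X x) ^ k) = (\<lambda>x. \<Sum>i\<le>k. real (k choose i) * (L x ^ i * X x ^ (k - i)))"
    by (simp add: binomial_ring mult.assoc)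
  have iP: "integrable M (\<lambda>x. L x ^ i * X x ^ (k - i))" if "i \<le> k" for i
    using that by (intro indep_var_power_mult(1)[OF ind] iL iX) auto
  have eP: "expectation (\<lambda>x. L x ^ i * X x ^ (k - i))
      = expectation (\<lambda>x. L x ^ i) * expectation (\<lambda>x. X x ^ (k - i))" if "i \<le> k" for i
    using that by (intro indep_var_power_mult(2)[OF ind] iL iX) auto
  show "integrable M (\<lambda>x. (L x + X x) ^ k)"
    unfolding binom by (intro Bochner_Integration.integrable_sum integrable_mult_right iP) simp
  show "expectation (\<lambda>x. (L x + X x) ^ k) = (\<Sum>i\<le>k. real (k choose i) *
           expectation (\<lambda>x. L x ^ i) * expectation (\<lambda>x. X x ^ (k - i)))"
    unfolding binom by (simp add: iP eP Bochner_Integration.integral_sum mult.assoc)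
qed

lemma gaussian_moments_add_indep:
  fixes L X :: "'a \<Rightarrow> real"
  assumes ind: "indep_var borel L borel X" and gL: "gaussian_moments L"
    and mX: "X \<in> borel_measurable M" and iX4: "integrable M (\<lambda>x. X x ^ 4)"
  shows "integrable M (\<lambda>x. (L x + X x) ^ 4)"
    and "expectation (\<lambda>x. L x + X x) = expectation X"
    and "expectation (\<lambda>x. (L x + X x)^2) = expectation (\<lambda>x. L x ^ 2) + expectation (\<lambda>x. X x ^ 2)"
    and "expectation (\<lambda>x. (L x + X x)^3) = 3 * expectation (\<lambda>x. L x ^ 2) * expectation X + expectation (\<lambda>x. X x ^ 3)"
    and "expectation (\<lambda>x. (L x + X x)^4) = 3 * (expectation (\<lambda>x. L x ^ 2))^2
        + 6 * expectation (\<lambda>x. L x ^ 2) * expectation (\<lambda>x. X x ^ 2) + expectation (\<lambda>x. X x ^ 4)"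
proof -
  have iL: "\<And>i. i \<le> 4 \<Longrightarrow> integrable M (\<lambda>x. L x ^ i)"
    using gaussian_moments_integrable_power[OF gL] .
  have iX: "\<And>i. i \<le> 4 \<Longrightarrow> integrable M (\<lambda>x. X x ^ i)"
    using integrable_power_le_4[OF mX iX4] .
  note E = indep_var_add_power(2)[OF ind]
  have moments: "expectation L = 0" "expectation (\<lambda>x. L x ^ 3) = 0"
    "expectation (\<lambda>x. L x ^ 4) = 3 * (expectation (\<lambda>x. L x ^ 2))^2"
    using gL by (simp_all add: gaussian_moments_def)
  show "integrable M (\<lambda>x. (L x + X x) ^ 4)" by (rule indep_var_add_power(1)[OF ind iL iX])
  show "expectation (\<lambda>x. L x + X x) = expectation X"
    using E[of 1] iL iX moments by (simp add: prob_space)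
  show "expectation (\<lambda>x. (L x + X x)^2) = expectation (\<lambda>x. L x ^ 2) + expectation (\<lambda>x. X x ^ 2)"
    using E[of 2] iL iX moments by (simp add: prob_space numeral_eq_Suc atMost_Suc)
  show "expectation (\<lambda>x. (L x + X x)^3) = 3 * expectation (\<lambda>x. L x ^ 2) * expectation X + expectation (\<lambda>x. X x ^ 3)"
    using E[of 3] iL iX moments by (simp add: prob_space numeral_eq_Suc atMost_Suc)
  show "expectation (\<lambda>x. (L x + X x)^4) = 3 * (expectation (\<lambda>x. L x ^ 2))^2
        + 6 * expectation (\<lambda>x. L x ^ 2) * expectation (\<lambda>x. X x ^ 2) + expectation (\<lambda>x. X x ^ 4)"
    using E[of 4] iL iX moments by (simp add: prob_space numeral_eq_Suc atMost_Suc)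
qed

lemma gaussian_moments_add:
  fixes L X :: "'a \<Rightarrow> real"
  assumes ind: "indep_var borel L borel X" and gL: "gaussian_moments L" and gX: "gaussian_moments X"
  shows "gaussian_moments (\<lambda>x. L x + X x)"
proof -
  have mX: "X \<in> borel_measurable M" and iX4: "integrable M (\<lambda>x. X x ^ 4)"
    and X: "expectation X = 0" "expectation (\<lambda>x. X x ^ 3) = 0"
      "expectation (\<lambda>x. X x ^ 4) = 3 * (expectation (\<lambda>x. X x ^ 2))^2"
    using gX by (simp_all add: gaussian_moments_def)
  note S = gaussian_moments_add_indep[OF ind gL mX iX4]
  have "L \<in> borel_measurable M" using gL by (simp add: gaussian_moments_def)
  then show ?thesis
    using S mX X unfolding gaussian_moments_def by (simp add: power2_eq_square algebra_simps)
qed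

lemma gaussian_moments_cmult:
  fixes L :: "'a \<Rightarrow> real"
  assumes "gaussian_moments L" shows "gaussian_moments (\<lambda>x. c * L x)"
  using assms unfolding gaussian_moments_def by (auto simp: power_mult_distrib)

lemma gaussian_rv_gaussian_moments:
  fixes X :: "'a \<Rightarrow> real"
  assumes g: "gaussian_rv M X m v"
  shows "gaussian_moments (\<lambda>x. X x - m)" "expectation (\<lambda>x. (X x - m)^2) = v"
proof -
  have mX: "X \<in> borel_measurable M" and v0: "v \<ge> 0" using g by (auto simp: gaussian_rv_def)
  have res: "integrable M (\<lambda>x. (X x - m) ^ 4) \<and> expectation (\<lambda>x. X x - m) = 0 \<and>
     expectation (\<lambda>x. (X x - m)^2) = v \<and> expectation (\<lambda>x. (X x - m)^3) = 0 \<and> expectation (\<lambda>x. (X x - m)^4) = 3 * v^2"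
  proof (cases "v > 0")
    case True
    define \<sigma> where "\<sigma> = sqrt v"
    have sp: "\<sigma> > 0" using True by (simp add: \<sigma>_def)
    have D: "distributed M lborel X (normal_density m \<sigma>)"
      using g True by (simp add: gaussian_rv_def \<sigma>_def)
    have I: "integrable M (\<lambda>x. (X x - m) ^ k)" for k
      using distributed_integrable[OF D, of "\<lambda>x. (x - m)^k"] integrable_normal_moment[where \<sigma>=\<sigma> and \<mu>=m and k=k, OF sp] by simp
    have E: "expectation (\<lambda>x. (X x - m) ^ k) = integral\<^sup>L lborel (\<lambda>x. normal_density m \<sigma> x * (x - m)^k)" for k
      using distributed_integral[OF D, of "\<lambda>x. (x - m)^k"] by simp
    have e1: "integral\<^sup>L lborel (\<lambda>x. normal_density m \<sigma> x * (x - m)^1) = 0"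
      using integral_normal_moment_odd[where \<sigma>=\<sigma> and \<mu>=m and k=0, OF sp] by simp
    have e3: "integral\<^sup>L lborel (\<lambda>x. normal_density m \<sigma> x * (x - m)^3) = 0"
      using integral_normal_moment_odd[where \<sigma>=\<sigma> and \<mu>=m and k=1, OF sp] by simp
    have e2: "integral\<^sup>L lborel (\<lambda>x. normal_density m \<sigma> x * (x - m)^2) = v"
      using integral_normal_moment_even[where \<sigma>=\<sigma> and \<mu>=m and k=1, OF sp] sp True by (simp add: \<sigma>_def)
    have e4: "integral\<^sup>L lborel (\<lambda>x. normal_density m \<sigma> x * (x - m)^4) = 3 * v^2"
    proof -
      have "integral\<^sup>L lborel (\<lambda>x. normal_density m \<sigma> x * (x - m)^(2*2)) = fact (2 * 2) / ((2 / \<sigma>\<^sup>2)^2 * fact 2)"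
        by (rule integral_normal_moment_even[where \<sigma>=\<sigma> and \<mu>=m and k=2, OF sp])
      moreover have "fact (2 * 2) / ((2 / \<sigma>\<^sup>2)^2 * fact 2) = 3 * v^2"
        using sp True by (simp add: \<sigma>_def fact_numeral power2_eq_square field_simps)
      ultimately show ?thesis by simp
    qed
    show ?thesis using I E[of 1] E[of 2] E[of 3] E[of 4] e1 e2 e3 e4 by simp
  next
    case False
    then have "v = 0" using v0 by simp
    then have ae: "AE x in M. X x = m" using g by (simp add: gaussian_rv_def)
    have ae_pow: "AE x in M. (X x - m) ^ k = 0" if "k > 0" for k::nat
      using ae by (rule eventually_mono) (use that in simp)
    have I: "integrable M (\<lambda>x. (X x - m) ^ k)" if "k > 0" for k
      using ae_pow[OF that] mX by (subst integrable_cong_AE[where g="\<lambda>x. 0"]) auto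
    have E: "expectation (\<lambda>x. (X x - m) ^ k) = 0" if "k > 0" for k
      using ae_pow[OF that] mX by (subst integral_cong_AE[where g="\<lambda>x. 0"]) auto
    show ?thesis using I[of 4] E[of 1] E[of 2] E[of 3] E[of 4] \<open>v = 0\<close> by simp
  qed
  then show "gaussian_moments (\<lambda>x. X x - m)" "expectation (\<lambda>x. (X x - m)^2) = v"
    using mX by (auto simp: gaussian_moments_def)
qed

lemma indep_vars_reindex:
  fixes X :: "'i \<Rightarrow> 'a \<Rightarrow> real"
  assumes ind: "indep_vars (\<lambda>_. borel) X I" and inj: "inj_on f J" and sub: "f ` J \<subseteq> I"
  shows "indep_vars (\<lambda>_. borel) (\<lambda>j. X (f j)) J"
proof -
  have "indep_vars (\<lambda>j. PiM {f j} (\<lambda>_. borel)) (\<lambda>j \<omega>. restrict (\<lambda>i. X i \<omega>) {f j}) J"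
    by (rule indep_vars_restrict[OF ind]) (use inj sub in \<open>auto simp: disjoint_family_on_def inj_on_def\<close>)
  then have "indep_vars (\<lambda>_. borel) (\<lambda>j x. (\<lambda>g. g (f j)) (restrict (\<lambda>i. X i x) {f j})) J"
    by (rule indep_vars_compose2) (auto intro: measurable_component_singleton)
  then show ?thesis by simp
qed

lemma gaussian_moments_sum:
  fixes \<xi> :: "'i \<Rightarrow> 'a \<Rightarrow> real"
  assumes fin: "finite I" and ind: "indep_vars (\<lambda>_. borel) \<xi> I"
    and g: "\<And>i. i \<in> I \<Longrightarrow> gaussian_moments (\<xi> i)"
  shows "gaussian_moments (\<lambda>x. \<Sum>i\<in>I. c i * \<xi> i x)"
proof -
  have ind': "indep_vars (\<lambda>_. borel) (\<lambda>i x. c i * \<xi> i x) I"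
    by (rule indep_vars_compose2[OF ind]) auto
  have "finite F \<Longrightarrow> F \<subseteq> I \<Longrightarrow> gaussian_moments (\<lambda>x. \<Sum>i\<in>F. c i * \<xi> i x)" for F
  proof (induction F rule: finite_induct)
    case empty then show ?case by (simp add: gaussian_moments_def)
  next
    case (insert k F)
    have "indep_var borel (\<lambda>x. c k * \<xi> k x) borel (\<lambda>\<omega>. \<Sum>i\<in>F. c i * \<xi> i \<omega>)"
      using indep_vars_sum[of F k "\<lambda>i x. c i * \<xi> i x"] insert indep_vars_subset[OF ind'] by auto
    then have "gaussian_moments (\<lambda>x. c k * \<xi> k x + (\<Sum>i\<in>F. c i * \<xi> i x))"
      by (rule gaussian_moments_add[OF _ gaussian_moments_cmult[OF g]]) (use insert in auto)
    then show ?case using insert by simp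
  qed
  then show ?thesis using fin by simp
qed

lemma expectation_indep_sum_mult:
  fixes \<xi> :: "'i \<Rightarrow> 'a \<Rightarrow> real"
  assumes fin: "finite I" and ind: "indep_vars (\<lambda>_. borel) \<xi> I"
    and g: "\<And>i. i \<in> I \<Longrightarrow> gaussian_moments (\<xi> i)"
  shows "expectation (\<lambda>x. (\<Sum>i\<in>I. c i * \<xi> i x) * (\<Sum>i\<in>I. d i * \<xi> i x))
           = (\<Sum>i\<in>I. c i * d i * expectation (\<lambda>x. \<xi> i x ^ 2))"
proof -
  have pij: "integrable M (\<lambda>x. \<xi> i x * \<xi> j x) \<and>
      expectation (\<lambda>x. \<xi> i x * \<xi> j x) = (if i = j then expectation (\<lambda>x. \<xi> i x ^ 2) else 0)"
    if "i \<in> I" "j \<in> I" for i j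
  proof (cases "i = j")
    case True
    then show ?thesis
      using gaussian_moments_integrable_power[OF g[OF that(1)], of 2] by (simp add: power2_eq_square)
  next
    case False
    have "indep_var borel (\<xi> i) borel (\<lambda>\<omega>. \<Sum>l\<in>{j}. \<xi> l \<omega>)"
      using indep_vars_sum[of "{j}" i \<xi>] indep_vars_subset[OF ind] that False by auto
    then have ij: "indep_var borel (\<xi> i) borel (\<xi> j)" by simp
    have i1: "integrable M (\<xi> i)" "integrable M (\<xi> j)"
      using gaussian_moments_integrable_power[OF g[OF that(1)], of 1]
        gaussian_moments_integrable_power[OF g[OF that(2)], of 1] by simp_all
    show ?thesis using indep_var_integrable[OF ij i1] indep_var_lebesgue_integral[OF ij i1] g that False
      by (simp add: gaussian_moments_def)
  qed
  have "(\<lambda>x. (\<Sum>i\<in>I. c i * \<xi> i x) * (\<Sum>i\<in>I. d i * \<xi> i x))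
      = (\<lambda>x. \<Sum>i\<in>I. \<Sum>j\<in>I. c i * d j * (\<xi> i x * \<xi> j x))"
    by (simp add: sum_product algebra_simps)
  then have "expectation (\<lambda>x. (\<Sum>i\<in>I. c i * \<xi> i x) * (\<Sum>i\<in>I. d i * \<xi> i x))
     = (\<Sum>i\<in>I. \<Sum>j\<in>I. c i * d j * expectation (\<lambda>x. \<xi> i x * \<xi> j x))"
    using pij by (simp add: Bochner_Integration.integral_sum)
  also have "\<dots> = (\<Sum>i\<in>I. \<Sum>j\<in>I. if j = i then c i * d i * expectation (\<lambda>x. \<xi> i x ^ 2) else 0)"
    using pij by (intro sum.cong refl) auto
  also have "\<dots> = (\<Sum>i\<in>I. c i * d i * expectation (\<lambda>x. \<xi> i x ^ 2))"
    using fin by (simp add: sum.delta)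
  finally show ?thesis .
qed

lemma expectation_linear5:
  fixes f1 f2 f3 f4 f5 :: "'a \<Rightarrow> real"
  assumes "integrable M f1" "integrable M f2" "integrable M f3" "integrable M f4" "integrable M f5"
  shows "expectation (\<lambda>x. c1 * f1 x + c2 * f2 x + c3 * f3 x + c4 * f4 x + c5 * f5 x)
     = c1 * expectation f1 + c2 * expectation f2 + c3 * expectation f3 + c4 * expectation f4 + c5 * expectation f5"
    and "integrable M (\<lambda>x. c1 * f1 x + c2 * f2 x + c3 * f3 x + c4 * f4 x + c5 * f5 x)"
  using assms by simp_all

lemma expectation_linear9:
  fixes f1 f2 f3 f4 f5 f6 f7 f8 f9 :: "'a \<Rightarrow> real"
  assumes "integrable M f1" "integrable M f2" "integrable M f3" "integrable M f4" "integrable M f5"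
    "integrable M f6" "integrable M f7" "integrable M f8" "integrable M f9"
  shows "expectation (\<lambda>x. c1 * f1 x + c2 * f2 x + c3 * f3 x + c4 * f4 x + c5 * f5 x + c6 * f6 x + c7 * f7 x + c8 * f8 x + c9 * f9 x)
     = c1 * expectation f1 + c2 * expectation f2 + c3 * expectation f3 + c4 * expectation f4 + c5 * expectation f5
       + c6 * expectation f6 + c7 * expectation f7 + c8 * expectation f8 + c9 * expectation f9"
    and "integrable M (\<lambda>x. c1 * f1 x + c2 * f2 x + c3 * f3 x + c4 * f4 x + c5 * f5 x + c6 * f6 x + c7 * f7 x + c8 * f8 x + c9 * f9 x)"
  using assms by simp_all

lemma gaussian_moments_integrable_mixed:
  fixes A B :: "'a \<Rightarrow> real"
  assumes gA: "gaussian_moments A" and gB: "gaussian_moments B" and ij: "i + j \<le> 4"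
  shows "integrable M (\<lambda>x. A x ^ i * B x ^ j)"
proof (rule Bochner_Integration.integrable_bound[where f="\<lambda>x. 1 + A x ^ 4 + B x ^ 4"])
  show "integrable M (\<lambda>x. 1 + A x ^ 4 + B x ^ 4)"
    using gA gB by (auto simp: gaussian_moments_def)
  show "(\<lambda>x. A x ^ i * B x ^ j) \<in> borel_measurable M" using gA gB by (auto simp: gaussian_moments_def)
  show "AE x in M. norm (A x ^ i * B x ^ j) \<le> norm (1 + A x ^ 4 + B x ^ 4)"
  proof (rule AE_I2)
    fix x
    have "0 \<le> 1 + A x ^ 4 + B x ^ 4"
      by (simp add: add_nonneg_nonneg zero_le_even_power)
    then show "norm (A x ^ i * B x ^ j) \<le> norm (1 + A x ^ 4 + B x ^ 4)"
      using abs_power_mult_le[OF ij, of "A x" "B x"] by simp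
  qed
qed

lemma gaussian_pair_moments:
  fixes A B :: "'a \<Rightarrow> real"
  assumes G: "\<And>\<alpha> \<beta>. gaussian_moments (\<lambda>x. \<alpha> * A x + \<beta> * B x)"
  shows "gaussian_moments A" "gaussian_moments B" "expectation (\<lambda>x. A x ^ 2 * B x ^ 1) = 0" "expectation (\<lambda>x. A x ^ 1 * B x ^ 2) = 0"
    "expectation (\<lambda>x. A x ^ 2 * B x ^ 2) = expectation (\<lambda>x. A x ^ 2) * expectation (\<lambda>x. B x ^ 2)
        + 2 * (expectation (\<lambda>x. A x * B x))^2"
proof -
  show gA: "gaussian_moments A" using G[of 1 0] by simp
  show gB: "gaussian_moments B" using G[of 0 1] by simp
  have gP: "gaussian_moments (\<lambda>x. A x + B x)" using G[of 1 1] by simp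
  have gM: "gaussian_moments (\<lambda>x. A x - B x)" using G[of 1 "-1"] by simp
  define m where "m i j = expectation (\<lambda>x. A x ^ i * B x ^ j)" for i j
  have I: "\<And>i j. i + j \<le> 4 \<Longrightarrow> integrable M (\<lambda>x. A x ^ i * B x ^ j)"
    by (rule gaussian_moments_integrable_mixed[OF gA gB])
  have lin: "\<And>c1 c2 c3 c4 c5 i1 j1 i2 j2 i3 j3 i4 j4 i5 j5.
     i1 + j1 \<le> 4 \<Longrightarrow> i2 + j2 \<le> 4 \<Longrightarrow> i3 + j3 \<le> 4 \<Longrightarrow> i4 + j4 \<le> 4 \<Longrightarrow> i5 + j5 \<le> 4 \<Longrightarrow>
     expectation (\<lambda>x. c1 * (A x ^ i1 * B x ^ j1) + c2 * (A x ^ i2 * B x ^ j2) + c3 * (A x ^ i3 * B x ^ j3)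
        + c4 * (A x ^ i4 * B x ^ j4) + c5 * (A x ^ i5 * B x ^ j5))
     = c1 * m i1 j1 + c2 * m i2 j2 + c3 * m i3 j3 + c4 * m i4 j4 + c5 * m i5 j5"
    unfolding m_def by (rule expectation_linear5(1)) (rule I; assumption)+
  have a3: "m 3 0 = 0" "m 0 3 = 0" using gA gB by (simp_all add: m_def gaussian_moments_def)
  have a4: "m 4 0 = 3 * (m 2 0)^2" "m 0 4 = 3 * (m 0 2)^2" using gA gB by (simp_all add: m_def gaussian_moments_def)
  have P3: "m 3 0 + 3 * m 2 1 + 3 * m 1 2 + m 0 3 = 0"
  proof -
    have "(\<lambda>x. (A x + B x) ^ 3) = (\<lambda>x. 1 * (A x ^ 3 * B x ^ 0) + 3 * (A x ^ 2 * B x ^ 1) + 3 * (A x ^ 1 * B x ^ 2) + 1 * (A x ^ 0 * B x ^ 3) + 0 * (A x ^ 0 * B x ^ 0))"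
      by (simp add: fun_eq_iff eval_nat_numeral algebra_simps)
    then show ?thesis using gP lin[of 3 0 2 1 1 2 0 3 0 0 1 3 3 1 0] by (simp add: gaussian_moments_def)
  qed
  have M3: "m 3 0 - 3 * m 2 1 + 3 * m 1 2 - m 0 3 = 0"
  proof -
    have "(\<lambda>x. (A x - B x) ^ 3) = (\<lambda>x. 1 * (A x ^ 3 * B x ^ 0) + (-3) * (A x ^ 2 * B x ^ 1) + 3 * (A x ^ 1 * B x ^ 2) + (-1) * (A x ^ 0 * B x ^ 3) + 0 * (A x ^ 0 * B x ^ 0))"
      by (simp add: fun_eq_iff eval_nat_numeral algebra_simps)
    then show ?thesis using gM lin[of 3 0 2 1 1 2 0 3 0 0 1 "-3" 3 "-1" 0] by (simp add: gaussian_moments_def)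
  qed
  show "expectation (\<lambda>x. A x ^ 2 * B x ^ 1) = 0" "expectation (\<lambda>x. A x ^ 1 * B x ^ 2) = 0"
    using P3 M3 a3 unfolding m_def by linarith+
  have S2: "expectation (\<lambda>x. (A x + B x) ^ 2) = m 2 0 + 2 * m 1 1 + m 0 2"
  proof -
    have "(\<lambda>x. (A x + B x) ^ 2) = (\<lambda>x. 1 * (A x ^ 2 * B x ^ 0) + 2 * (A x ^ 1 * B x ^ 1) + 1 * (A x ^ 0 * B x ^ 2) + 0 * (A x ^ 0 * B x ^ 0) + 0 * (A x ^ 0 * B x ^ 0))"
      by (simp add: fun_eq_iff eval_nat_numeral algebra_simps)
    then show ?thesis using lin[of 2 0 1 1 0 2 0 0 0 0 1 2 1 0 0] by simp
  qed
  have D2: "expectation (\<lambda>x. (A x - B x) ^ 2) = m 2 0 - 2 * m 1 1 + m 0 2"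
  proof -
    have "(\<lambda>x. (A x - B x) ^ 2) = (\<lambda>x. 1 * (A x ^ 2 * B x ^ 0) + (-2) * (A x ^ 1 * B x ^ 1) + 1 * (A x ^ 0 * B x ^ 2) + 0 * (A x ^ 0 * B x ^ 0) + 0 * (A x ^ 0 * B x ^ 0))"
      by (simp add: fun_eq_iff eval_nat_numeral algebra_simps)
    then show ?thesis using lin[of 2 0 1 1 0 2 0 0 0 0 1 "-2" 1 0 0] by simp
  qed
  have P4: "m 4 0 + 4 * m 3 1 + 6 * m 2 2 + 4 * m 1 3 + m 0 4 = 3 * (m 2 0 + 2 * m 1 1 + m 0 2)^2"
  proof -
    have "(\<lambda>x. (A x + B x) ^ 4) = (\<lambda>x. 1 * (A x ^ 4 * B x ^ 0) + 4 * (A x ^ 3 * B x ^ 1) + 6 * (A x ^ 2 * B x ^ 2) + 4 * (A x ^ 1 * B x ^ 3) + 1 * (A x ^ 0 * B x ^ 4))"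
      by (simp add: fun_eq_iff eval_nat_numeral algebra_simps)
    then show ?thesis using gP lin[of 4 0 3 1 2 2 1 3 0 4 1 4 6 4 1] S2 by (simp add: gaussian_moments_def)
  qed
  have M4: "m 4 0 - 4 * m 3 1 + 6 * m 2 2 - 4 * m 1 3 + m 0 4 = 3 * (m 2 0 - 2 * m 1 1 + m 0 2)^2"
  proof -
    have "(\<lambda>x. (A x - B x) ^ 4) = (\<lambda>x. 1 * (A x ^ 4 * B x ^ 0) + (-4) * (A x ^ 3 * B x ^ 1) + 6 * (A x ^ 2 * B x ^ 2) + (-4) * (A x ^ 1 * B x ^ 3) + 1 * (A x ^ 0 * B x ^ 4))"
      by (simp add: fun_eq_iff eval_nat_numeral algebra_simps)
    then show ?thesis using gM lin[of 4 0 3 1 2 2 1 3 0 4 1 "-4" 6 "-4" 1] D2 by (simp add: gaussian_moments_def)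
  qed
  have "m 2 2 = m 2 0 * m 0 2 + 2 * (m 1 1)^2"
    using P4 M4 a4 by (simp add: power2_eq_square algebra_simps)
  then show "expectation (\<lambda>x. A x ^ 2 * B x ^ 2) = expectation (\<lambda>x. A x ^ 2) * expectation (\<lambda>x. B x ^ 2)
        + 2 * (expectation (\<lambda>x. A x * B x))^2" by (simp add: m_def)
qed

lemma variance_gaussian_pair_mult:
  fixes A B :: "'a \<Rightarrow> real"
  assumes G: "\<And>\<alpha> \<beta>. gaussian_moments (\<lambda>x. \<alpha> * A x + \<beta> * B x)"
  shows "variance (\<lambda>x. (a + A x) * (b + B x)) = a^2 * expectation (\<lambda>x. B x ^ 2) + b^2 * expectation (\<lambda>x. A x ^ 2)
      + 2 * a * b * expectation (\<lambda>x. A x * B x) + expectation (\<lambda>x. A x ^ 2) * expectation (\<lambda>x. B x ^ 2)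
      + (expectation (\<lambda>x. A x * B x))^2"
proof -
  note F = gaussian_pair_moments[OF G]
  have gA: "gaussian_moments A" and gB: "gaussian_moments B" by (rule F(1), rule F(2))
  define m where "m i j = expectation (\<lambda>x. A x ^ i * B x ^ j)" for i j
  have I: "\<And>i j. i + j \<le> 4 \<Longrightarrow> integrable M (\<lambda>x. A x ^ i * B x ^ j)"
    by (rule gaussian_moments_integrable_mixed[OF gA gB])
  have m0: "m 0 0 = 1" "m 1 0 = 0" "m 0 1 = 0" "m 2 1 = 0" "m 1 2 = 0"
    using gA gB F(3,4) by (simp_all add: m_def gaussian_moments_def prob_space)
  have m22: "m 2 2 = m 2 0 * m 0 2 + 2 * (m 1 1)^2" using F(5) by (simp add: m_def)
  have e1: "(\<lambda>x. (a + A x) * (b + B x)) = (\<lambda>x. (a*b) * (A x ^ 0 * B x ^ 0) + a * (A x ^ 0 * B x ^ 1) + b * (A x ^ 1 * B x ^ 0) + 1 * (A x ^ 1 * B x ^ 1) + 0 * (A x ^ 0 * B x ^ 0))"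
    by (simp add: fun_eq_iff algebra_simps)
  have e2: "(\<lambda>x. ((a + A x) * (b + B x))^2) = (\<lambda>x. (a^2*b^2) * (A x ^ 0 * B x ^ 0) + (2*a^2*b) * (A x ^ 0 * B x ^ 1) + a^2 * (A x ^ 0 * B x ^ 2)
     + (2*a*b^2) * (A x ^ 1 * B x ^ 0) + (4*a*b) * (A x ^ 1 * B x ^ 1) + (2*a) * (A x ^ 1 * B x ^ 2)
     + b^2 * (A x ^ 2 * B x ^ 0) + (2*b) * (A x ^ 2 * B x ^ 1) + 1 * (A x ^ 2 * B x ^ 2))"
    by (simp add: fun_eq_iff eval_nat_numeral algebra_simps)
  have i1: "integrable M (\<lambda>x. (a + A x) * (b + B x))"
    unfolding e1 by (rule expectation_linear5(2)) (rule I, simp)+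
  have i2: "integrable M (\<lambda>x. ((a + A x) * (b + B x))^2)"
    unfolding e2 by (rule expectation_linear9(2)) (rule I, simp)+
  have E1: "expectation (\<lambda>x. (a + A x) * (b + B x)) = a*b * m 0 0 + a * m 0 1 + b * m 1 0 + 1 * m 1 1 + 0 * m 0 0"
    unfolding e1 m_def by (rule expectation_linear5(1)) (rule I, simp)+
  have E2: "expectation (\<lambda>x. ((a + A x) * (b + B x))^2) = (a^2*b^2) * m 0 0 + (2*a^2*b) * m 0 1 + a^2 * m 0 2
     + (2*a*b^2) * m 1 0 + (4*a*b) * m 1 1 + (2*a) * m 1 2 + b^2 * m 2 0 + (2*b) * m 2 1 + 1 * m 2 2"
    unfolding e2 m_def by (rule expectation_linear9(1)) (rule I, simp)+
  have "variance (\<lambda>x. (a + A x) * (b + B x)) = expectation (\<lambda>x. ((a + A x) * (b + B x))^2) - (expectation (\<lambda>x. (a + A x) * (b + B x)))^2"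
    by (rule variance_eq[OF i1 i2])
  also have "\<dots> = a^2 * m 0 2 + b^2 * m 2 0 + 2 * a * b * m 1 1 + m 2 0 * m 0 2 + (m 1 1)^2"
    unfolding E1 E2 m0 m22 by (simp add: power2_eq_square algebra_simps)
  finally show ?thesis by (simp add: m_def)
qed

lemma expectation_le_of_AE_limit:
  fixes h :: "nat \<Rightarrow> 'a \<Rightarrow> real" and H :: "'a \<Rightarrow> real"
  assumes hm: "\<And>m. h m \<in> borel_measurable M" and Hm: "H \<in> borel_measurable M"
    and hpos: "\<And>m x. 0 \<le> h m x" and lim: "AE x in M. (\<lambda>m. h m x) \<longlonglongrightarrow> H x"
    and hi: "\<And>m. integrable M (h m)" and hb: "\<And>m. expectation (h m) \<le> B"
  shows "integrable M H" "expectation H \<le> B"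
proof -
  have B0: "0 \<le> B" using hb[of 0] integral_nonneg_AE[of "h 0" M] hpos by (meson AE_I2 order_trans)
  have Hpos: "AE x in M. 0 \<le> H x"
    using lim by eventually_elim (rule LIMSEQ_le_const, auto intro: hpos)
  have "(\<integral>\<^sup>+x. ennreal (H x) \<partial>M) = (\<integral>\<^sup>+x. liminf (\<lambda>m. ennreal (h m x)) \<partial>M)"
  proof (rule nn_integral_cong_AE)
    show "AE x in M. ennreal (H x) = liminf (\<lambda>m. ennreal (h m x))"
      using lim
    proof eventually_elim
      case (elim x)
      then have "(\<lambda>m. ennreal (h m x)) \<longlonglongrightarrow> ennreal (H x)" by (rule tendsto_ennrealI)
      then show ?case by (simp add: lim_imp_Liminf)
    qed
  qed
  also have "\<dots> \<le> liminf (\<lambda>m. \<integral>\<^sup>+x. ennreal (h m x) \<partial>M)"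
    by (rule nn_integral_liminf) (use hm in auto)
  also have "\<dots> \<le> ennreal B"
  proof -
    have e: "(\<integral>\<^sup>+x. ennreal (h m x) \<partial>M) = ennreal (expectation (h m))" for m
      using hi hpos by (intro nn_integral_eq_integral) auto
    have "limsup (\<lambda>m. \<integral>\<^sup>+x. ennreal (h m x) \<partial>M) \<le> ennreal B"
      by (rule Limsup_bounded) (auto simp: e hb intro!: always_eventually ennreal_leI)
    then show ?thesis using Liminf_le_Limsup[of sequentially] by (meson order_trans trivial_limit_sequentially)
  qed
  finally have nn: "(\<integral>\<^sup>+x. ennreal (H x) \<partial>M) \<le> ennreal B" .
  show iH: "integrable M H"
    by (rule integrableI_nonneg[OF Hm Hpos]) (use nn in \<open>auto simp: top_unique intro: le_less_trans\<close>)
  have "ennreal (expectation H) = (\<integral>\<^sup>+x. ennreal (H x) \<partial>M)"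
    using iH Hpos by (intro nn_integral_eq_integral[symmetric]) auto
  then have "ennreal (expectation H) \<le> ennreal B" using nn by simp
  then show "expectation H \<le> B" using B0 by (simp add: ennreal_le_iff)
qed

lemma variance_cong_AE:
  fixes f g :: "'a \<Rightarrow> real"
  assumes "f \<in> borel_measurable M" "g \<in> borel_measurable M" "AE x in M. f x = g x"
  shows "variance f = variance g"
proof -
  have e: "expectation f = expectation g" by (rule integral_cong_AE) (use assms in auto)
  show ?thesis unfolding e by (rule integral_cong_AE) (use assms in \<open>auto elim: eventually_mono\<close>)
qed

lemma variance_cmult:
  fixes f :: "'a \<Rightarrow> real"
  shows "variance (\<lambda>x. c * f x) = c^2 * variance f"
proof -
  have "(\<lambda>x. (c * f x - expectation (\<lambda>x. c * f x))^2) = (\<lambda>x. c^2 * (f x - expectation f)^2)"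
    by (simp add: fun_eq_iff power2_eq_square algebra_simps)
  then show ?thesis by simp
qed

lemma corr_AE_affine:
  fixes X Y A B :: "'a \<Rightarrow> real"
  assumes meas: "X \<in> borel_measurable M" "Y \<in> borel_measurable M"
      "A \<in> borel_measurable M" "B \<in> borel_measurable M"
    and X: "AE x in M. X x = a + A x" and Y: "AE x in M. Y x = b + B x"
    and iA: "integrable M A" and iB: "integrable M B"
    and iAB: "integrable M (\<lambda>x. A x * B x)" and iAA: "integrable M (\<lambda>x. A x * A x)"
    and iBB: "integrable M (\<lambda>x. B x * B x)"
    and eA: "expectation A = 0" and eB: "expectation B = 0"
  shows "corr M X Y = expectation (\<lambda>x. A x * B x)
           / sqrt (expectation (\<lambda>x. A x * A x) * expectation (\<lambda>x. B x * B x))"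
proof -
  note [measurable] = meas
  have EX: "expectation X = a"
    using integral_cong_AE[where f=X and g="\<lambda>x. a + A x"] X iA eA by (simp add: prob_space)
  have EY: "expectation Y = b"
    using integral_cong_AE[where f=Y and g="\<lambda>x. b + B x"] Y iB eB by (simp add: prob_space)
  have "AE x in M. X x * Y x = a * b + a * B x + b * A x + A x * B x"
    using X Y by eventually_elim (simp add: algebra_simps)
  then have EXY: "expectation (\<lambda>x. X x * Y x) = a * b + expectation (\<lambda>x. A x * B x)"
    using integral_cong_AE[where f="\<lambda>x. X x * Y x" and g="\<lambda>x. a * b + a * B x + b * A x + A x * B x"]
      iA iB iAB eA eB by (simp add: prob_space)
  have "AE x in M. (X x - a)^2 = A x * A x" using X by eventually_elim (simp add: power2_eq_square)
  then have VX: "expectation (\<lambda>x. (X x - a)^2) = expectation (\<lambda>x. A x * A x)"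
    by (intro integral_cong_AE) auto
  have "AE x in M. (Y x - b)^2 = B x * B x" using Y by eventually_elim (simp add: power2_eq_square)
  then have VY: "expectation (\<lambda>x. (Y x - b)^2) = expectation (\<lambda>x. B x * B x)"
    by (intro integral_cong_AE) auto
  show ?thesis unfolding corr_def EX EY EXY VX VY by simp
qed

lemma expectation_mult_commute: "expectation (\<lambda>x. f x * g x) = expectation (\<lambda>x. g x * (f x :: real))"
  by (simp add: mult.commute)

lemma expectation_mult_linear:
  fixes f g h :: "'a \<Rightarrow> real"
  assumes "integrable M (\<lambda>x. f x * g x)" "integrable M (\<lambda>x. f x * h x)"
  shows "expectation (\<lambda>x. f x * (a * g x + b * h x)) = a * expectation (\<lambda>x. f x * g x) + b * expectation (\<lambda>x. f x * h x)"
proof -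
  have "(\<lambda>x. f x * (a * g x + b * h x)) = (\<lambda>x. a * (f x * g x) + b * (f x * h x))" by (simp add: fun_eq_iff algebra_simps)
  then show ?thesis using assms by simp
qed

lemma expectation_square_le:
  fixes X :: "'a \<Rightarrow> real"
  assumes "integrable M X" "integrable M (\<lambda>x. X x ^ 2)"
  shows "(expectation X)^2 \<le> expectation (\<lambda>x. X x ^ 2)"
  using variance_eq[OF assms] variance_positive[of X] by simp

lemma indep_perturbation_moment_bounds:
  fixes S Q :: "'a \<Rightarrow> real"
  assumes ind: "indep_var borel S borel Q" and gS: "gaussian_moments S"
    and mQ: "Q \<in> borel_measurable M" and iQ4: "integrable M (\<lambda>x. Q x ^ 4)"
    and Q2: "expectation (\<lambda>x. Q x ^ 2) \<le> t" and Q4: "expectation (\<lambda>x. Q x ^ 4) \<le> 3 * t^2"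
  defines "s \<equiv> expectation (\<lambda>x. S x ^ 2)"
  shows "(expectation (\<lambda>x. S x + Q x))^2 \<le> t"
    and "\<bar>expectation (\<lambda>x. (S x + Q x)^2) - s\<bar> \<le> t"
    and "\<bar>expectation (\<lambda>x. (S x + Q x)^3) - 3 * s * expectation Q\<bar> \<le> t + 3 * t^2"
    and "\<bar>expectation (\<lambda>x. (S x + Q x)^4) - 3 * s^2\<bar> \<le> 6 * s * t + 3 * t^2"
proof -
  note sum_moments = gaussian_moments_add_indep[OF ind gS mQ iQ4]
  have iQ: "\<And>j. j \<le> 4 \<Longrightarrow> integrable M (\<lambda>x. Q x ^ j)" using integrable_power_le_4[OF mQ iQ4] .
  have Q2_nonneg: "0 \<le> expectation (\<lambda>x. Q x ^ 2)" by (rule integral_nonneg_AE) auto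
  have Q4_nonneg: "0 \<le> expectation (\<lambda>x. Q x ^ 4)" by (rule integral_nonneg_AE) (auto simp: zero_le_even_power)
  have s_nonneg: "0 \<le> s" unfolding s_def by (rule integral_nonneg_AE) auto
  have Q3: "\<bar>expectation (\<lambda>x. Q x ^ 3)\<bar> \<le> t + 3 * t^2"
  proof -
    have "\<bar>expectation (\<lambda>x. Q x ^ 3)\<bar> \<le> expectation (\<lambda>x. \<bar>Q x ^ 3\<bar>)" by (rule integral_abs_bound)
    also have "\<dots> \<le> expectation (\<lambda>x. Q x ^ 2 + Q x ^ 4)"
      by (rule integral_mono) (use iQ[of 3] iQ[of 2] iQ[of 4] abs_cube_le in auto)
    also have "\<dots> = expectation (\<lambda>x. Q x ^ 2) + expectation (\<lambda>x. Q x ^ 4)"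
      using iQ[of 2] iQ[of 4] by simp
    finally show ?thesis using Q2 Q4 by simp
  qed
  have "6 * s * expectation (\<lambda>x. Q x ^ 2) \<le> 6 * s * t"
    using Q2 s_nonneg by (intro mult_left_mono) auto
  then show "\<bar>expectation (\<lambda>x. (S x + Q x)^4) - 3 * s^2\<bar> \<le> 6 * s * t + 3 * t^2"
    using sum_moments(5) s_nonneg Q2_nonneg Q4_nonneg Q4 by (simp add: s_def)
  show "(expectation (\<lambda>x. S x + Q x))^2 \<le> t"
    using sum_moments(2) expectation_square_le[OF iQ[of 1, simplified] iQ[of 2, simplified]] Q2 by simp
  show "\<bar>expectation (\<lambda>x. (S x + Q x)^2) - s\<bar> \<le> t"
    using sum_moments(3) Q2 Q2_nonneg by (simp add: s_def)
  show "\<bar>expectation (\<lambda>x. (S x + Q x)^3) - 3 * s * expectation Q\<bar> \<le> t + 3 * t^2"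
    using sum_moments(4) Q3 by (simp add: s_def)
qed

lemma gaussian_moments_limit:
  fixes Z :: "'a \<Rightarrow> real" and S Q :: "nat \<Rightarrow> 'a \<Rightarrow> real"
  assumes mZ: "Z \<in> borel_measurable M"
    and split: "\<And>k. AE x in M. Z x = S k x + Q k x"
    and ind: "\<And>k. indep_var borel (S k) borel (Q k)" and gS: "\<And>k. gaussian_moments (S k)"
    and mQ: "\<And>k. Q k \<in> borel_measurable M" and iQ4: "\<And>k. integrable M (\<lambda>x. Q k x ^ 4)"
    and Q2: "\<And>k. expectation (\<lambda>x. Q k x ^ 2) \<le> t k"
    and Q4: "\<And>k. expectation (\<lambda>x. Q k x ^ 4) \<le> 3 * (t k)^2"
    and t: "t \<longlonglongrightarrow> 0" and S2: "(\<lambda>k. expectation (\<lambda>x. S k x ^ 2)) \<longlonglongrightarrow> \<sigma>2"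
  shows "gaussian_moments Z" "expectation (\<lambda>x. Z x ^ 2) = \<sigma>2"
proof -
  define s where "s k = expectation (\<lambda>x. S k x ^ 2)" for k
  note bounds = indep_perturbation_moment_bounds[OF ind gS mQ iQ4 Q2 Q4, folded s_def]
  have mS[measurable]: "S k \<in> borel_measurable M" for k using gS by (simp add: gaussian_moments_def)
  note [measurable] = mZ mQ
  have EZ: "expectation (\<lambda>x. Z x ^ p) = expectation (\<lambda>x. (S k x + Q k x) ^ p)" for p k
    using split[of k] by (intro integral_cong_AE) (auto elim: eventually_mono)
  have "(expectation Z)^2 = 0"
    by (rule eq_limit_of_dist_le[where b=t and x="\<lambda>_. 0"]) (use bounds(1) EZ[of 1] t in auto)
  then have EZ1: "expectation Z = 0" by simp
  then have EQ1: "expectation (Q k) = 0" for k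
    using EZ[of 1 k] gaussian_moments_add_indep(2)[OF ind gS mQ iQ4] by simp
  have EZ2: "expectation (\<lambda>x. Z x ^ 2) = \<sigma>2"
    by (rule eq_limit_of_dist_le[where b=t and x=s]) (use bounds(2) EZ[of 2] t S2 in \<open>auto simp: s_def[abs_def]\<close>)
  have EZ3: "expectation (\<lambda>x. Z x ^ 3) = 0"
  proof (rule eq_limit_of_dist_le[where b="\<lambda>k. t k + 3 * (t k)^2" and x="\<lambda>_. 0"])
    have "(\<lambda>k. t k + 3 * (t k)^2) \<longlonglongrightarrow> 0 + 3 * 0^2" using t by (intro tendsto_intros)
    then show "(\<lambda>k. t k + 3 * (t k)^2) \<longlonglongrightarrow> 0" by simp
  qed (use bounds(3) EZ[of 3] EQ1 in auto)
  have EZ4: "expectation (\<lambda>x. Z x ^ 4) = 3 * \<sigma>2^2"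
  proof (rule eq_limit_of_dist_le[where b="\<lambda>k. 6 * s k * t k + 3 * (t k)^2" and x="\<lambda>k. 3 * (s k)^2"])
    have "(\<lambda>k. 6 * s k * t k + 3 * (t k)^2) \<longlonglongrightarrow> 6 * \<sigma>2 * 0 + 3 * 0^2"
      using S2 t unfolding s_def by (intro tendsto_intros)
    then show "(\<lambda>k. 6 * s k * t k + 3 * (t k)^2) \<longlonglongrightarrow> 0" by simp
    show "(\<lambda>k. 3 * (s k)^2) \<longlonglongrightarrow> 3 * \<sigma>2^2" using S2 unfolding s_def by (intro tendsto_intros)
  qed (use bounds(4) EZ[of 4] in auto)
  have "integrable M (\<lambda>x. Z x ^ 4)"
    using gaussian_moments_add_indep(1)[OF ind gS mQ iQ4, of 0] split[of 0]
    by (subst integrable_cong_AE[where g="\<lambda>x. (S 0 x + Q 0 x) ^ 4"]) (auto elim: eventually_mono)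
  then show "gaussian_moments Z" "expectation (\<lambda>x. Z x ^ 2) = \<sigma>2"
    using EZ1 EZ2 EZ3 EZ4 by (simp_all add: gaussian_moments_def)
qed

lemma prob_tendsto_0_of_AE_eventually_notin:
  assumes A: "\<And>k. A k \<in> sets M" and ev: "AE x in M. eventually (\<lambda>k. x \<notin> A k) sequentially"
  shows "(\<lambda>k. prob (A k)) \<longlonglongrightarrow> 0"
proof -
  have "(\<lambda>k. expectation (indicator (A k) :: 'a \<Rightarrow> real)) \<longlonglongrightarrow> expectation (\<lambda>x. 0 :: real)"
  proof (rule integral_dominated_convergence[where w="\<lambda>_. 1"])
    show "AE x in M. (\<lambda>k. indicator (A k) x :: real) \<longlonglongrightarrow> 0"
      using ev by eventually_elim (rule tendsto_eventually, auto elim: eventually_mono)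
  qed (use A in auto)
  then show ?thesis using A by (simp add: measure_def[symmetric])
qed

lemma AE_eq_0_of_prob_abs_ge:
  fixes D :: "'a \<Rightarrow> real"
  assumes mD[measurable]: "D \<in> borel_measurable M"
    and P0: "\<And>\<epsilon>. \<epsilon> > 0 \<Longrightarrow> prob {x \<in> space M. \<epsilon> \<le> \<bar>D x\<bar>} = 0"
  shows "AE x in M. D x = 0"
proof -
  have "AE x in M. \<bar>D x\<bar> < 1 / Suc k" for k
  proof -
    have "emeasure M {x \<in> space M. 1 / Suc k \<le> \<bar>D x\<bar>} = 0"
      using P0[of "1 / Suc k"] by (simp add: emeasure_eq_measure)
    then show ?thesis
      by (subst AE_iff_measurable[where N="{x \<in> space M. 1 / Suc k \<le> \<bar>D x\<bar>}"]) (auto simp: not_less)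
  qed
  then have "AE x in M. \<forall>k. \<bar>D x\<bar> < 1 / Suc k"
    by (subst AE_all_countable) blast
  then show ?thesis
  proof eventually_elim
    case (elim x)
    show "D x = 0"
    proof (rule ccontr)
      assume "D x \<noteq> 0"
      then obtain k where "0 < k" "inverse (real k) < \<bar>D x\<bar>"
        using ex_inverse_of_nat_less[of "\<bar>D x\<bar>"] by auto
      with elim[rule_format, of "k - 1"] show False by (simp add: inverse_eq_divide)
    qed
  qed
qed

end

section \<open>The AR(1) state as a moving average\<close>

locale ar1_noise = prob_space +
  fixes \<eta> :: "int \<Rightarrow> 'a \<Rightarrow> real" and \<phi> v :: real
  assumes ind: "indep_vars (\<lambda>_. borel) \<eta> UNIV"
    and gs: "\<And>j. gaussian_rv M (\<eta> j) 0 v"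
    and ph0: "0 \<le> \<phi>" and ph1: "\<phi> < 1"
begin

lemma eta_moments: "gaussian_moments (\<eta> j)" "expectation (\<lambda>x. \<eta> j x ^ 2) = v" "v \<ge> 0" "\<eta> j \<in> borel_measurable M"
  using gaussian_rv_gaussian_moments[OF gs[of j]] gs[of j] by (auto simp: gaussian_rv_def)

lemma eta_measurable[measurable]: "\<eta> j \<in> borel_measurable M"
  by (rule eta_moments(4))

lemma v_nonneg: "v \<ge> 0" by (rule eta_moments(3))

definition ma_partial :: "int \<Rightarrow> nat \<Rightarrow> 'a \<Rightarrow> real" where
  "ma_partial s k x = (\<Sum>j<k. \<phi>^j * \<eta> (s - int j) x)"

definition ma :: "int \<Rightarrow> 'a \<Rightarrow> real" where
  "ma s x = (\<Sum>j. \<phi>^j * \<eta> (s - int j) x)"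

lemma ma_measurable[measurable]: "ma s \<in> borel_measurable M"
  unfolding ma_def by measurable

lemma ma_partial_measurable[measurable]: "ma_partial s k \<in> borel_measurable M"
  unfolding ma_partial_def by measurable

lemma weighted_eta_sum_moments:
  assumes J: "finite J"
  shows "gaussian_moments (\<lambda>x. \<Sum>j\<in>J. \<phi>^j * \<eta> (s - int j) x)"
    "expectation (\<lambda>x. (\<Sum>j\<in>J. \<phi>^j * \<eta> (s - int j) x)^2) = v * (\<Sum>j\<in>J. (\<phi>^2)^j)"
proof -
  have indJ: "indep_vars (\<lambda>_. borel) (\<lambda>j. \<eta> (s - int j)) J"
    by (rule indep_vars_reindex[OF ind]) (auto simp: inj_on_def)
  show "gaussian_moments (\<lambda>x. \<Sum>j\<in>J. \<phi>^j * \<eta> (s - int j) x)"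
    by (rule gaussian_moments_sum[OF J indJ eta_moments(1)])
  have "expectation (\<lambda>x. (\<Sum>j\<in>J. \<phi>^j * \<eta> (s - int j) x)^2)
     = expectation (\<lambda>x. (\<Sum>j\<in>J. \<phi>^j * \<eta> (s - int j) x) * (\<Sum>j\<in>J. \<phi>^j * \<eta> (s - int j) x))"
    by (simp add: power2_eq_square)
  also have "\<dots> = (\<Sum>j\<in>J. \<phi>^j * \<phi>^j * expectation (\<lambda>x. \<eta> (s - int j) x ^ 2))"
    by (rule expectation_indep_sum_mult[OF J indJ eta_moments(1)])
  also have "\<dots> = (\<Sum>j\<in>J. v * (\<phi>^2)^j)"
  proof (intro sum.cong refl)
    fix j
    have pp: "(\<phi>^2)^j = \<phi>^j*\<phi>^j" by (simp add: power2_eq_square power_mult_distrib)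
    show "\<phi>^j * \<phi>^j * expectation (\<lambda>x. \<eta> (s - int j) x ^ 2) = v * (\<phi>^2)^j"
      by (simp only: eta_moments(2) pp) simp
  qed
  also have "\<dots> = v * (\<Sum>j\<in>J. (\<phi>^2)^j)"
    by (simp add: sum_distrib_left)
  finally show "expectation (\<lambda>x. (\<Sum>j\<in>J. \<phi>^j * \<eta> (s - int j) x)^2) = v * (\<Sum>j\<in>J. (\<phi>^2)^j)" .
qed

lemma nn_integral_abs_eta_le: "(\<integral>\<^sup>+x. ennreal \<bar>\<eta> j x\<bar> \<partial>M) \<le> ennreal (1 + v)"
proof -
  have i2: "integrable M (\<lambda>x. \<eta> j x ^ 2)" using gaussian_moments_integrable_power[OF eta_moments(1)[of j], of 2] by simp
  have "(\<integral>\<^sup>+x. ennreal \<bar>\<eta> j x\<bar> \<partial>M) \<le> (\<integral>\<^sup>+x. ennreal (1 + \<eta> j x ^ 2) \<partial>M)"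
  proof (rule nn_integral_mono)
    fix x
    have "\<bar>\<eta> j x\<bar> \<le> 1 + \<eta> j x ^ 2"
    proof (cases "\<bar>\<eta> j x\<bar> \<le> 1")
      case True then show ?thesis by (smt (verit) zero_le_power2)
    next
      case False
      then have "\<bar>\<eta> j x\<bar> * 1 \<le> \<bar>\<eta> j x\<bar> * \<bar>\<eta> j x\<bar>" by (intro mult_left_mono) auto
      then show ?thesis by (simp add: power2_eq_square)
    qed
    then show "ennreal \<bar>\<eta> j x\<bar> \<le> ennreal (1 + \<eta> j x ^ 2)" by (rule ennreal_leI)
  qed
  also have "\<dots> = ennreal (expectation (\<lambda>x. 1 + \<eta> j x ^ 2))"
    using i2 by (intro nn_integral_eq_integral) auto
  also have "expectation (\<lambda>x. 1 + \<eta> j x ^ 2) = 1 + v"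
    using i2 eta_moments(2)[of j] by (simp add: prob_space)
  finally show ?thesis .
qed

lemma AE_weighted_eta_finite: "AE x in M. (\<Sum>j. ennreal (\<phi>^j * \<bar>\<eta> (s - int j) x\<bar>)) \<noteq> \<infinity>"
proof -
  let ?f = "\<lambda>j x. ennreal (\<phi>^j * \<bar>\<eta> (s - int j) x\<bar>)"
  have "(\<integral>\<^sup>+x. (\<Sum>j. ?f j x) \<partial>M) = (\<Sum>j. \<integral>\<^sup>+x. ?f j x \<partial>M)"
    by (rule nn_integral_suminf) measurable
  also have "\<dots> \<le> (\<Sum>j. ennreal (\<phi>^j * (1 + v)))"
  proof (rule suminf_le)
    fix j
    have "(\<integral>\<^sup>+x. ?f j x \<partial>M) = ennreal (\<phi>^j) * (\<integral>\<^sup>+x. ennreal \<bar>\<eta> (s - int j) x\<bar> \<partial>M)"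
      using ph0 by (subst nn_integral_cmult[symmetric]) (auto simp: ennreal_mult)
    also have "\<dots> \<le> ennreal (\<phi>^j) * ennreal (1 + v)"
      by (rule mult_left_mono[OF nn_integral_abs_eta_le]) simp
    finally show "(\<integral>\<^sup>+x. ?f j x \<partial>M) \<le> ennreal (\<phi>^j * (1 + v))"
      using ph0 v_nonneg by (simp add: ennreal_mult)
  qed auto
  also have "\<dots> = ennreal (\<Sum>j. \<phi>^j * (1 + v))"
    using ph0 ph1 v_nonneg by (intro suminf_ennreal2) (auto intro!: summable_mult2 summable_geometric)
  also have "\<dots> < \<infinity>" by simp
  finally have "(\<integral>\<^sup>+x. (\<Sum>j. ?f j x) \<partial>M) \<noteq> \<infinity>" by simp
  then show ?thesis
    by (intro nn_integral_PInf_AE) measurable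
qed

lemma AE_summable_ma: "AE x in M. summable (\<lambda>j. \<phi>^j * \<bar>\<eta> (s - int j) x\<bar>)"
  using AE_weighted_eta_finite[of s]
  by eventually_elim (rule summable_suminf_not_top, use ph0 in auto)

lemma ma_split:
  assumes sm: "summable (\<lambda>j. \<phi>^j * \<bar>\<eta> (s - int j) x\<bar>)"
  shows "ma s x = ma_partial s k x + \<phi>^k * ma (s - int k) x"
proof -
  let ?f = "\<lambda>j. \<phi>^j * \<eta> (s - int j) x"
  have "summable (\<lambda>j. \<bar>?f j\<bar>)" using sm ph0 by (simp add: abs_mult)
  then have sf: "summable ?f" by (rule summable_rabs_cancel)
  have "ma s x = (\<Sum>n. ?f (n + k)) + (\<Sum>i<k. ?f i)"
    unfolding ma_def by (rule suminf_split_initial_segment[OF sf])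
  moreover have "(\<Sum>n. ?f (n + k)) = \<phi>^k * ma (s - int k) x"
  proof (cases "\<phi>^k = 0")
    case True
    then have "\<phi> = 0" "k > 0" by (auto simp: gr0I)
    then show ?thesis by (simp add: True zero_power)
  next
    case False
    have e: "?f (n + k) = \<phi>^k * (\<phi>^n * \<eta> (s - int k - int n) x)" for n
      by (simp add: power_add algebra_simps)
    have "summable (\<lambda>n. ?f (n + k))" using summable_iff_shift[of ?f k] sf by blast
    then have "summable (\<lambda>n. \<phi>^k * (\<phi>^n * \<eta> (s - int k - int n) x))" by (simp only: e)
    then have "summable (\<lambda>n. \<phi>^n * \<eta> (s - int k - int n) x)" using False by (rule summable_mult_D)
    then show ?thesis unfolding e ma_def by (rule suminf_mult)
  qed
  ultimately show ?thesis by (simp add: ma_partial_def)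
qed

lemma indep_ma_partial_remainder: "indep_var borel (ma_partial s k) borel (\<lambda>x. \<phi>^k * ma (s - int k) x)"
proof -
  define A where "A = (\<lambda>j. s - int j) ` {..<k}"
  define B where "B = {i. i \<le> s - int k}"
  have AB: "A \<inter> B = {}" by (auto simp: A_def B_def)
  have i: "indep_var (PiM A (\<lambda>_. borel)) (\<lambda>\<omega>. restrict (\<lambda>i. \<eta> i \<omega>) A) (PiM B (\<lambda>_. borel)) (\<lambda>\<omega>. restrict (\<lambda>i. \<eta> i \<omega>) B)"
    by (rule indep_var_restrict[OF ind AB]) auto
  define F where "F g = (\<Sum>j<k. \<phi>^j * g (s - int j))" for g :: "int \<Rightarrow> real"
  define G where "G g = \<phi>^k * (\<Sum>n. \<phi>^n * g (s - int k - int n))" for g :: "int \<Rightarrow> real"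
  have Fm: "F \<in> borel_measurable (PiM A (\<lambda>_. borel))"
    unfolding F_def
    by (intro borel_measurable_sum borel_measurable_times borel_measurable_const measurable_component_singleton[where M="\<lambda>_. borel", simplified]) (auto simp: A_def)
  have Gm: "G \<in> borel_measurable (PiM B (\<lambda>_. borel))"
    unfolding G_def
    by (intro borel_measurable_suminf borel_measurable_times borel_measurable_const measurable_component_singleton[where M="\<lambda>_. borel", simplified]) (auto simp: B_def)
  have "indep_var borel (F \<circ> (\<lambda>\<omega>. restrict (\<lambda>i. \<eta> i \<omega>) A)) borel (G \<circ> (\<lambda>\<omega>. restrict (\<lambda>i. \<eta> i \<omega>) B))"
    by (rule indep_var_compose[OF i Fm Gm])
  moreover have "F \<circ> (\<lambda>\<omega>. restrict (\<lambda>i. \<eta> i \<omega>) A) = ma_partial s k"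
    by (auto simp: fun_eq_iff F_def ma_partial_def A_def intro!: sum.cong)
  moreover have "G \<circ> (\<lambda>\<omega>. restrict (\<lambda>i. \<eta> i \<omega>) B) = (\<lambda>x. \<phi>^k * ma (s - int k) x)"
    by (auto simp: fun_eq_iff G_def ma_def B_def)
  ultimately show ?thesis by simp
qed

lemma ma_partial_add_diff: "ma_partial s (m + k) x - ma_partial s k x = (\<Sum>j\<in>{k..<m+k}. \<phi>^j * \<eta> (s - int j) x)"
proof -
  have e: "{..<m+k} = {..<k} \<union> {k..<m+k}" by auto
  have "ma_partial s (m + k) x = (\<Sum>j\<in>{..<k} \<union> {k..<m+k}. \<phi>^j * \<eta> (s - int j) x)"
    unfolding ma_partial_def e ..
  also have "\<dots> = ma_partial s k x + (\<Sum>j\<in>{k..<m+k}. \<phi>^j * \<eta> (s - int j) x)"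
    unfolding ma_partial_def by (rule sum.union_disjoint) auto
  finally show ?thesis by simp
qed

lemma geometric_tail_le: "(\<Sum>j\<in>{k..<m+k}. (\<phi>^2)^j) \<le> (\<phi>^2)^k / (1 - \<phi>^2)"
proof -
  have q0: "0 \<le> \<phi>^2" and q1: "\<phi>^2 < 1" using ph0 ph1 by (auto simp: power_less_one_iff abs_square_less_1)
  have "(\<Sum>j\<in>{k..<m+k}. (\<phi>^2)^j) = (\<Sum>i\<in>{0..<m}. (\<phi>^2)^(i+k))"
    using sum.shift_bounds_nat_ivl[of "\<lambda>j. (\<phi>^2)^j" 0 k m] by simp
  also have "\<dots> = (\<phi>^2)^k * (\<Sum>i<m. (\<phi>^2)^i)"
    by (simp add: power_add sum_distrib_left atLeast0LessThan mult.commute)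
  also have "(\<Sum>i<m. (\<phi>^2)^i) = (1 - (\<phi>^2)^m) / (1 - \<phi>^2)"
    using q1 by (simp add: sum_gp_strict)
  also have "\<dots> \<le> 1 / (1 - \<phi>^2)"
    using q0 q1 by (intro divide_right_mono) auto
  finally show ?thesis using q0 by (simp add: mult_left_mono divide_simps split: if_splits)
qed

lemma weighted_eta_block_moments:
  fixes k m :: nat and s :: int
  defines "\<tau> \<equiv> v * (\<phi>^2)^k / (1 - \<phi>^2)"
    and "D \<equiv> \<lambda>x. \<Sum>j\<in>{k..<m+k}. \<phi>^j * \<eta> (s - int j) x"
  shows "gaussian_moments D" "expectation (\<lambda>x. D x ^ 2) \<le> \<tau>"
    "expectation (\<lambda>x. D x ^ 4) \<le> 3 * \<tau>^2"
proof -
  show g: "gaussian_moments D" unfolding D_def by (rule weighted_eta_sum_moments) simp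
  have "expectation (\<lambda>x. D x ^ 2) = v * (\<Sum>j\<in>{k..<m+k}. (\<phi>^2)^j)"
    unfolding D_def by (rule weighted_eta_sum_moments) simp
  also have "\<dots> \<le> v * ((\<phi>^2)^k / (1 - \<phi>^2))"
    by (rule mult_left_mono[OF geometric_tail_le v_nonneg])
  finally show D2: "expectation (\<lambda>x. D x ^ 2) \<le> \<tau>" by (simp add: \<tau>_def)
  have "0 \<le> expectation (\<lambda>x. D x ^ 2)" by (rule integral_nonneg_AE) auto
  with D2 have "3 * (expectation (\<lambda>x. D x ^ 2))^2 \<le> 3 * \<tau>^2"
    by (simp add: power_mono)
  with g show "expectation (\<lambda>x. D x ^ 4) \<le> 3 * \<tau>^2"
    by (simp add: gaussian_moments_def)
qed

lemma ma_remainder_moments: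
  fixes k :: nat
  defines "\<tau> \<equiv> v * (\<phi>^2)^k / (1 - \<phi>^2)"
  shows "integrable M (\<lambda>x. (\<phi>^k * ma (s - int k) x)^4)"
    and "expectation (\<lambda>x. (\<phi>^k * ma (s - int k) x)^2) \<le> \<tau>"
    and "expectation (\<lambda>x. (\<phi>^k * ma (s - int k) x)^4) \<le> 3 * \<tau>^2"
proof -
  define D where "D m x = (\<Sum>j\<in>{k..<m+k}. \<phi>^j * \<eta> (s - int j) x)" for m x
  have block: "gaussian_moments (D m)" "expectation (\<lambda>x. D m x ^ 2) \<le> \<tau>"
    "expectation (\<lambda>x. D m x ^ 4) \<le> 3 * \<tau>^2" for m
    unfolding D_def \<tau>_def by (rule weighted_eta_block_moments)+
  have iD: "integrable M (\<lambda>x. D m x ^ p)" if "p \<le> 4" for m p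
    using gaussian_moments_integrable_power[OF block(1) that] .
  have lim: "AE x in M. (\<lambda>m. D m x) \<longlonglongrightarrow> \<phi>^k * ma (s - int k) x"
    using AE_summable_ma[of s]
  proof eventually_elim
    case (elim x)
    have "summable (\<lambda>j. \<bar>\<phi>^j * \<eta> (s - int j) x\<bar>)" using elim ph0 by (simp add: abs_mult)
    then have "(\<lambda>n. ma_partial s n x) \<longlonglongrightarrow> ma s x"
      unfolding ma_partial_def ma_def by (rule summable_LIMSEQ[OF summable_rabs_cancel])
    then have "(\<lambda>m. ma_partial s (m + k) x) \<longlonglongrightarrow> ma s x"
      by (rule LIMSEQ_ignore_initial_segment)
    then have "(\<lambda>m. ma_partial s (m + k) x - ma_partial s k x) \<longlonglongrightarrow> ma s x - ma_partial s k x"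
      by (rule tendsto_diff) simp
    moreover have "ma s x - ma_partial s k x = \<phi>^k * ma (s - int k) x"
      using ma_split[OF elim, of k] by linarith
    moreover have "ma_partial s (m + k) x - ma_partial s k x = D m x" for m
      unfolding D_def by (rule ma_partial_add_diff)
    ultimately show ?case by simp
  qed
  have lim2: "AE x in M. (\<lambda>m. D m x ^ 2) \<longlonglongrightarrow> (\<phi>^k * ma (s - int k) x)^2"
    using lim by eventually_elim (rule tendsto_power)
  have lim4: "AE x in M. (\<lambda>m. D m x ^ 4) \<longlonglongrightarrow> (\<phi>^k * ma (s - int k) x)^4"
    using lim by eventually_elim (rule tendsto_power)
  have m: "(\<lambda>x. D m x ^ p) \<in> borel_measurable M"
    "(\<lambda>x. (\<phi>^k * ma (s - int k) x) ^ p) \<in> borel_measurable M" for m p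
    unfolding D_def
    by (intro borel_measurable_power borel_measurable_sum borel_measurable_times
        borel_measurable_const eta_measurable ma_measurable)+
  have nonneg: "0 \<le> D m x ^ 2" "0 \<le> D m x ^ 4" for m x by (simp_all add: zero_le_even_power)
  show "expectation (\<lambda>x. (\<phi>^k * ma (s - int k) x)^2) \<le> \<tau>"
    by (rule expectation_le_of_AE_limit(2)[OF m nonneg(1) lim2 iD block(2)]) simp
  show "integrable M (\<lambda>x. (\<phi>^k * ma (s - int k) x)^4)"
    by (rule expectation_le_of_AE_limit(1)[OF m nonneg(2) lim4 iD block(3)]) simp
  show "expectation (\<lambda>x. (\<phi>^k * ma (s - int k) x)^4) \<le> 3 * \<tau>^2"
    by (rule expectation_le_of_AE_limit(2)[OF m nonneg(2) lim4 iD block(3)]) simp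
qed

lemma ma_moments: "gaussian_moments (ma s)" "expectation (\<lambda>x. ma s x ^ 2) = v / (1 - \<phi>^2)"
proof -
  have q: "0 \<le> \<phi>^2" "\<phi>^2 < 1" using ph0 ph1 by (auto simp: abs_square_less_1)
  have split: "AE x in M. ma s x = ma_partial s k x + \<phi>^k * ma (s - int k) x" for k
    using AE_summable_ma[of s] by eventually_elim (rule ma_split)
  have S: "gaussian_moments (ma_partial s k)"
    "expectation (\<lambda>x. ma_partial s k x ^ 2) = v * (\<Sum>j<k. (\<phi>^2)^j)" for k
    using weighted_eta_sum_moments[of "{..<k}" s] by (simp_all add: ma_partial_def[abs_def])
  have "(\<lambda>k. v * (\<phi>^2)^k / (1 - \<phi>^2)) \<longlonglongrightarrow> v * 0 / (1 - \<phi>^2)"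
    using q by (intro tendsto_intros LIMSEQ_power_zero) auto
  then have t: "(\<lambda>k. v * (\<phi>^2)^k / (1 - \<phi>^2)) \<longlonglongrightarrow> 0" by simp
  have "(\<lambda>k. v * (\<Sum>j<k. (\<phi>^2)^j)) \<longlonglongrightarrow> v * (1 / (1 - \<phi>^2))"
    using geometric_sums[of "\<phi>^2"] q by (intro tendsto_mult_left) (simp add: sums_def)
  then have S2: "(\<lambda>k. expectation (\<lambda>x. ma_partial s k x ^ 2)) \<longlonglongrightarrow> v / (1 - \<phi>^2)" by (simp add: S(2))
  have mQ: "(\<lambda>x. \<phi>^k * ma (s - int k) x) \<in> borel_measurable M" for k
    by (intro borel_measurable_times borel_measurable_const ma_measurable)
  show "gaussian_moments (ma s)" "expectation (\<lambda>x. ma s x ^ 2) = v / (1 - \<phi>^2)"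
    by (rule gaussian_moments_limit[where S="ma_partial s" and Q="\<lambda>k x. \<phi>^k * ma (s - int k) x",
          OF ma_measurable split indep_ma_partial_remainder S(1) mQ ma_remainder_moments t S2])+
qed

end

locale stationary_ar1 = ar1_noise +
  fixes \<mu>t :: "int \<Rightarrow> 'a \<Rightarrow> real" and \<mu>0 :: real
  assumes mu_rv: "\<And>s. \<mu>t s \<in> borel_measurable M"
    and mu_rec: "\<And>s x. x \<in> space M \<Longrightarrow> \<mu>t s x = \<mu>0 + \<phi> * \<mu>t (s - 1) x + \<eta> s x"
    and mu_stat: "\<And>h. distr M (PiM UNIV (\<lambda>_. borel)) (\<lambda>x s. \<mu>t (s + h) x)
                      = distr M (PiM UNIV (\<lambda>_. borel)) (\<lambda>x s. \<mu>t s x)"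
begin

lemma mu_measurable[measurable]: "\<mu>t s \<in> borel_measurable M" by (rule mu_rv)

definition "mu_bar = \<mu>0 / (1 - \<phi>)"
definition "U s x = \<mu>t s x - mu_bar"

lemma U_measurable[measurable]: "U s \<in> borel_measurable M" unfolding U_def by measurable

lemma U_rec: "x \<in> space M \<Longrightarrow> U s x = \<phi> * U (s - 1) x + \<eta> s x"
proof -
  assume x: "x \<in> space M"
  have "mu_bar = \<mu>0 + \<phi> * mu_bar" using ph1 by (simp add: mu_bar_def field_simps)
  then show ?thesis using mu_rec[OF x, of s] unfolding U_def by (simp add: algebra_simps)
qed

lemma U_expand: "x \<in> space M \<Longrightarrow> U s x = ma_partial s k x + \<phi>^k * U (s - int k) x"
proof (induction k)
  case 0 then show ?case by (simp add: ma_partial_def)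
next
  case (Suc k)
  have "U (s - int k) x = \<phi> * U (s - int (Suc k)) x + \<eta> (s - int k) x"
    using U_rec[OF Suc.prems, of "s - int k"] by (simp add: algebra_simps)
  then show ?case using Suc by (simp add: ma_partial_def algebra_simps)
qed

lemma distr_mu_shift: "distr M borel (\<mu>t (s + h)) = distr M borel (\<mu>t s)"
proof -
  have proj: "(\<lambda>\<omega>. \<omega> s) \<in> measurable (PiM UNIV (\<lambda>_. borel)) (borel :: real measure)"
    by (rule measurable_component_singleton) simp
  have path: "(\<lambda>x s. \<mu>t (s + h) x) \<in> measurable M (PiM UNIV (\<lambda>_. borel))" for h
    by (rule measurable_PiM_single'[where f="\<lambda>s x. \<mu>t (s + h) x"]) auto
  have "distr M borel (\<mu>t (s + h)) = distr (distr M (PiM UNIV (\<lambda>_. borel)) (\<lambda>x s. \<mu>t (s + h) x)) borel (\<lambda>\<omega>. \<omega> s)"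
    using distr_distr[OF proj path, of h] by (simp add: comp_def)
  also have "\<dots> = distr (distr M (PiM UNIV (\<lambda>_. borel)) (\<lambda>x s. \<mu>t (s + 0) x)) borel (\<lambda>\<omega>. \<omega> s)"
    by (simp only: mu_stat)
  also have "\<dots> = distr M borel (\<mu>t s)"
    using distr_distr[OF proj path, of 0] by (simp add: comp_def)
  finally show ?thesis .
qed

lemma prob_U_shift:
  assumes B: "B \<in> sets borel"
  shows "prob {x \<in> space M. U (s + h) x \<in> B} = prob {x \<in> space M. U s x \<in> B}"
proof -
  define A where "A = (\<lambda>y. y - mu_bar) -` B"
  have "(\<lambda>y::real. y - mu_bar) \<in> borel_measurable borel" by simp
  from measurable_sets[OF this B] have A: "A \<in> sets borel" by (simp add: A_def)
  have e: "{x \<in> space M. U r x \<in> B} = \<mu>t r -` A \<inter> space M" for r by (auto simp: A_def U_def)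
  have "emeasure (distr M borel (\<mu>t (s + h))) A = emeasure (distr M borel (\<mu>t s)) A"
    by (simp only: distr_mu_shift)
  then show ?thesis unfolding e measure_def using A by (simp add: emeasure_distr)
qed

text \<open>Stationarity is used only here: phi^k U_{s-k} has the law of phi^k U_s, which tends to
  zero in probability, while the tail ma s - ma_partial s k tends to zero almost surely.\<close>

lemma prob_U_ma_gap_le:
  "prob {x \<in> space M. \<epsilon> \<le> \<bar>U s x - ma s x\<bar>}
     \<le> prob {x \<in> space M. \<epsilon> / 2 \<le> \<phi>^k * \<bar>U s x\<bar>}
       + prob {x \<in> space M. \<epsilon> / 2 \<le> \<bar>ma s x - ma_partial s k x\<bar>}"
proof -
  define A where "A = {x \<in> space M. U (s + - int k) x \<in> {y. \<epsilon> / 2 \<le> \<phi>^k * \<bar>y\<bar>}}"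
  define B where "B = {x \<in> space M. \<epsilon> / 2 \<le> \<bar>ma s x - ma_partial s k x\<bar>}"
  have "{x \<in> space M. \<epsilon> \<le> \<bar>U s x - ma s x\<bar>} \<subseteq> A \<union> B"
  proof
    fix x assume x: "x \<in> {x \<in> space M. \<epsilon> \<le> \<bar>U s x - ma s x\<bar>}"
    then have "U s x - ma s x = \<phi>^k * U (s + - int k) x - (ma s x - ma_partial s k x)"
      using U_expand[of x s k] by simp
    then have "\<bar>U s x - ma s x\<bar> \<le> \<phi>^k * \<bar>U (s + - int k) x\<bar> + \<bar>ma s x - ma_partial s k x\<bar>"
      using abs_triangle_ineq4[of "\<phi>^k * U (s + - int k) x" "ma s x - ma_partial s k x"] ph0
      by (simp add: abs_mult)
    then show "x \<in> A \<union> B" using x by (auto simp: A_def B_def)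
  qed
  then have "prob {x \<in> space M. \<epsilon> \<le> \<bar>U s x - ma s x\<bar>} \<le> prob A + prob B"
    unfolding A_def B_def by (intro order_trans[OF finite_measure_mono measure_Un_le]) measurable
  also have "prob A = prob {x \<in> space M. \<epsilon> / 2 \<le> \<phi>^k * \<bar>U s x\<bar>}"
    unfolding A_def by (subst prob_U_shift) auto
  finally show ?thesis unfolding B_def .
qed

lemma AE_U_eq_ma: "AE x in M. U s x = ma s x"
proof -
  have R_lim: "AE x in M. (\<lambda>k. ma s x - ma_partial s k x) \<longlonglongrightarrow> 0"
    using AE_summable_ma[of s]
  proof eventually_elim
    case (elim x)
    have "summable (\<lambda>j. \<bar>\<phi>^j * \<eta> (s - int j) x\<bar>)" using elim ph0 by (simp add: abs_mult)
    then have "(\<lambda>k. ma_partial s k x) \<longlonglongrightarrow> ma s x"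
      unfolding ma_partial_def ma_def by (rule summable_LIMSEQ[OF summable_rabs_cancel])
    then have "(\<lambda>k. ma s x - ma_partial s k x) \<longlonglongrightarrow> ma s x - ma s x" by (intro tendsto_intros)
    then show ?case by simp
  qed
  have "prob {x \<in> space M. \<epsilon> \<le> \<bar>U s x - ma s x\<bar>} = 0" if \<epsilon>: "\<epsilon> > 0" for \<epsilon>
  proof -
    define A where "A k = {x \<in> space M. \<epsilon> / 2 \<le> \<phi>^k * \<bar>U s x\<bar>}" for k
    define B where "B k = {x \<in> space M. \<epsilon> / 2 \<le> \<bar>ma s x - ma_partial s k x\<bar>}" for k
    have sets: "A k \<in> sets M" "B k \<in> sets M" for k
      unfolding A_def B_def by measurable
    have "(\<lambda>k. prob (A k)) \<longlonglongrightarrow> 0"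
    proof (rule prob_tendsto_0_of_AE_eventually_notin[OF sets(1)], rule AE_I2)
      fix x
      have "(\<lambda>k. \<phi>^k * \<bar>U s x\<bar>) \<longlonglongrightarrow> 0"
        using ph0 ph1 by (intro tendsto_mult_left_zero LIMSEQ_power_zero) auto
      then have "eventually (\<lambda>k. \<phi>^k * \<bar>U s x\<bar> < \<epsilon> / 2) sequentially"
        by (rule order_tendstoD(2)) (simp add: \<epsilon>)
      then show "eventually (\<lambda>k. x \<notin> A k) sequentially"
        by eventually_elim (simp add: A_def)
    qed
    moreover have "(\<lambda>k. prob (B k)) \<longlonglongrightarrow> 0"
    proof (rule prob_tendsto_0_of_AE_eventually_notin[OF sets(2)])
      show "AE x in M. eventually (\<lambda>k. x \<notin> B k) sequentially"
        using R_lim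
      proof eventually_elim
        case (elim x)
        then have "(\<lambda>k. \<bar>ma s x - ma_partial s k x\<bar>) \<longlonglongrightarrow> 0" by (simp add: tendsto_rabs_zero_iff)
        then have "eventually (\<lambda>k. \<bar>ma s x - ma_partial s k x\<bar> < \<epsilon> / 2) sequentially"
          by (rule order_tendstoD(2)) (simp add: \<epsilon>)
        then show ?case by eventually_elim (simp add: B_def)
      qed
    qed
    ultimately have "(\<lambda>k. prob (A k) + prob (B k)) \<longlonglongrightarrow> 0" by (metis add_0 tendsto_add)
    then have "prob {x \<in> space M. \<epsilon> \<le> \<bar>U s x - ma s x\<bar>} \<le> 0"
      using prob_U_ma_gap_le unfolding A_def B_def by (intro LIMSEQ_le_const) auto
    then show ?thesis by (simp add: order_antisym)
  qed
  then have "AE x in M. U s x - ma s x = 0"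
    by (intro AE_eq_0_of_prob_abs_ge) auto
  then show ?thesis by simp
qed

end

section \<open>Returns on a window of dates\<close>

locale window_model = stationary_ar1 +
  fixes \<epsilon> :: "int \<Rightarrow> 'a \<Rightarrow> real" and s\<epsilon> :: real and s0 :: int and n :: nat
  assumes indJ: "indep_vars (\<lambda>_. borel) (\<lambda>i. case i of Inl s \<Rightarrow> \<eta> s | Inr s \<Rightarrow> \<epsilon> s) UNIV"
    and eps_g: "\<And>s. gaussian_rv M (\<epsilon> s) 0 s\<epsilon>"
begin

definition "shock i = (case i of Inl s \<Rightarrow> \<eta> s | Inr s \<Rightarrow> \<epsilon> s)"
definition "window_index = Inl ` {s0..s0 + int n} \<union> Inr ` {s0..s0 + int n}"
text \<open>The independent coordinates of the window: the moving average at s0 replaces eta s0,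
  whose past it summarises, and sigma is the stationary variance sigma_mu^2.\<close>

definition "\<xi> i x = (if i = Inl s0 then ma s0 x else shock i x)"
definition "\<sigma> = v / (1 - \<phi>^2)"

lemma finite_window_index: "finite window_index" unfolding window_index_def by simp

lemma eps_moments: "gaussian_moments (\<epsilon> j)" "expectation (\<lambda>x. \<epsilon> j x ^ 2) = s\<epsilon>" "\<epsilon> j \<in> borel_measurable M"
  using gaussian_rv_gaussian_moments[OF eps_g[of j]] eps_g[of j] by (auto simp: gaussian_rv_def)

lemma eps_measurable[measurable]: "\<epsilon> j \<in> borel_measurable M" by (rule eps_moments(3))

lemma indep_xi: "indep_vars (\<lambda>_. borel) \<xi> window_index"
proof -
  define K where "K i = (if i = Inl s0 then Inl ` {..s0} else {i})" for i :: "int + int"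
  define G where "G g = (\<Sum>j. \<phi>^j * g (Inl (s0 - int j)))" for g :: "int + int \<Rightarrow> real"
  define F where "F i = (if i = Inl s0 then G else (\<lambda>g. g i))" for i
  have indX: "indep_vars (\<lambda>_. borel) shock UNIV" using indJ by (simp add: shock_def[abs_def])
  have r: "indep_vars (\<lambda>i. PiM (K i) (\<lambda>_. borel)) (\<lambda>i \<omega>. restrict (\<lambda>j. shock j \<omega>) (K i)) window_index"
    by (rule indep_vars_restrict[OF indX]) (auto simp: K_def disjoint_family_on_def window_index_def)
  have Fm: "F i \<in> borel_measurable (PiM (K i) (\<lambda>_. borel))" for i
  proof (cases "i = Inl s0")
    case True
    then show ?thesis unfolding F_def G_def K_def if_P[OF True]
      by (intro borel_measurable_suminf borel_measurable_times borel_measurable_const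
          measurable_component_singleton[where M="\<lambda>_. borel", simplified]) auto
  next
    case False
    then show ?thesis unfolding F_def K_def if_not_P[OF False]
      by (intro measurable_component_singleton[where M="\<lambda>_. borel", simplified]) auto
  qed
  have "indep_vars (\<lambda>_. borel) (\<lambda>i x. F i (restrict (\<lambda>j. shock j x) (K i))) window_index"
    by (rule indep_vars_compose2[OF r Fm])
  moreover have "(\<lambda>x. F i (restrict (\<lambda>j. shock j x) (K i))) = \<xi> i" for i
    by (auto simp: fun_eq_iff F_def K_def G_def \<xi>_def ma_def shock_def)
  ultimately show ?thesis by simp
qed

lemma xi_eq: "\<xi> i = (if i = Inl s0 then ma s0 else shock i)"
  by (auto simp: fun_eq_iff \<xi>_def)

lemma xi_moments: "gaussian_moments (\<xi> i)"
proof (cases i)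
  case (Inl a)
  then show ?thesis by (cases "a = s0") (auto simp: xi_eq shock_def ma_moments eta_moments)
next
  case (Inr b)
  then show ?thesis by (auto simp: xi_eq shock_def eps_moments)
qed

lemma xi_measurable[measurable]: "\<xi> i \<in> borel_measurable M"
  using xi_moments[of i] by (simp add: gaussian_moments_def)

definition "lin_comb c x = (\<Sum>i\<in>window_index. c i * \<xi> i x)"
definition "in_span S f \<longleftrightarrow> (\<exists>c. (\<forall>i. i \<notin> S \<longrightarrow> c i = 0) \<and> (\<forall>x. f x = lin_comb c x))"

lemma sum_indicator: "i \<in> window_index \<Longrightarrow> (\<Sum>j\<in>window_index. (if j = i then 1 else 0) * f j) = (f i :: real)"
proof -
  assume i: "i \<in> window_index"
  have "(\<Sum>j\<in>window_index. (if j = i then 1 else 0) * f j) = (\<Sum>j\<in>window_index. if i = j then f j else 0)"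
    by (rule sum.cong) auto
  also have "\<dots> = f i" using i finite_window_index by (simp add: sum.delta)
  finally show ?thesis .
qed

lemma lin_comb_moments: "gaussian_moments (lin_comb c)"
  unfolding lin_comb_def[abs_def] by (rule gaussian_moments_sum[OF finite_window_index indep_xi xi_moments])

lemma expectation_lin_comb_mult: "expectation (\<lambda>x. lin_comb c x * lin_comb d x) = (\<Sum>i\<in>window_index. c i * d i * expectation (\<lambda>x. \<xi> i x ^ 2))"
  unfolding lin_comb_def by (rule expectation_indep_sum_mult[OF finite_window_index indep_xi xi_moments])

lemma in_span_moments: "in_span S f \<Longrightarrow> gaussian_moments f"
  unfolding in_span_def using lin_comb_moments by (metis ext)

lemma in_span_add: "in_span S f \<Longrightarrow> in_span S' g \<Longrightarrow> in_span (S \<union> S') (\<lambda>x. a * f x + b * g x)"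
proof -
  assume "in_span S f" "in_span S' g"
  then obtain c d where c: "\<forall>i. i \<notin> S \<longrightarrow> c i = 0" "\<forall>x. f x = lin_comb c x"
    and d: "\<forall>i. i \<notin> S' \<longrightarrow> d i = 0" "\<forall>x. g x = lin_comb d x" unfolding in_span_def by blast
  show ?thesis unfolding in_span_def
    by (rule exI[of _ "\<lambda>i. a * c i + b * d i"])
       (use c d in \<open>auto simp: lin_comb_def sum.distrib sum_distrib_left algebra_simps\<close>)
qed

lemma in_span_mono: "in_span S f \<Longrightarrow> S \<subseteq> S' \<Longrightarrow> in_span S' f"
  unfolding in_span_def by blast

lemma in_span_xi: "i \<in> window_index \<Longrightarrow> in_span {i} (\<xi> i)"
  unfolding in_span_def lin_comb_def
  by (rule exI[of _ "\<lambda>j. if j = i then 1 else 0"]) (simp add: sum_indicator)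

lemma in_span_zero: "in_span {} (\<lambda>x. 0)"
  unfolding in_span_def lin_comb_def by (rule exI[of _ "\<lambda>_. 0"]) simp

lemma in_span_sum: "finite F \<Longrightarrow> (\<And>k. k \<in> F \<Longrightarrow> in_span S (f k)) \<Longrightarrow> in_span S (\<lambda>x. \<Sum>k\<in>F. f k x)"
proof (induction F rule: finite_induct)
  case empty then show ?case using in_span_mono[OF in_span_zero] by simp
next
  case (insert k F)
  have "in_span (S \<union> S) (\<lambda>x. 1 * f k x + 1 * (\<Sum>k\<in>F. f k x))"
    by (rule in_span_add) (use insert in auto)
  then show ?case using insert by simp
qed

lemma in_span_orthogonal:
  assumes "in_span S f" "i \<in> window_index" "i \<notin> S"
  shows "expectation (\<lambda>x. f x * \<xi> i x) = 0"
proof -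
  obtain c where c: "\<forall>j. j \<notin> S \<longrightarrow> c j = 0" "\<forall>x. f x = lin_comb c x" using assms(1) unfolding in_span_def by blast
  define d where "d j = (if j = i then 1 else 0::real)" for j
  have "\<xi> i x = lin_comb d x" for x using assms(2) sum_indicator[of i "\<lambda>j. \<xi> j x"] by (simp add: lin_comb_def d_def)
  then have "expectation (\<lambda>x. f x * \<xi> i x) = expectation (\<lambda>x. lin_comb c x * lin_comb d x)" using c by simp
  also have "\<dots> = (\<Sum>j\<in>window_index. c j * d j * expectation (\<lambda>x. \<xi> j x ^ 2))" by (rule expectation_lin_comb_mult)
  also have "\<dots> = 0" using c assms(3) by (intro sum.neutral) (auto simp: d_def)
  finally show ?thesis .
qed

lemma in_span_integrable_mult: "in_span S f \<Longrightarrow> in_span S' g \<Longrightarrow> integrable M (\<lambda>x. f x * g x)"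
  using gaussian_moments_integrable_mixed[OF in_span_moments in_span_moments, of S f S' g 1 1] by simp

primrec Ut :: "nat \<Rightarrow> 'a \<Rightarrow> real" where
  Ut_0: "Ut 0 = ma s0"
| "Ut (Suc k) = (\<lambda>x. \<phi> * Ut k x + \<eta> (s0 + int (Suc k)) x)"

lemma Ut_Suc: "Ut (Suc k) x = \<phi> * Ut k x + \<eta> (s0 + int (Suc k)) x"
  by simp

lemma Ut_measurable[measurable]: "Ut k \<in> borel_measurable M"
  by (induction k) simp_all

lemma AE_U_eq_Ut: "AE x in M. \<forall>k. U (s0 + int k) x = Ut k x"
  using AE_U_eq_ma[of s0] AE_space
proof eventually_elim
  case (elim x)
  show ?case
  proof
    fix k show "U (s0 + int k) x = Ut k x"
    proof (induction k)
      case 0 then show ?case using elim by (simp add: Ut_0)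
    next
      case (Suc k)
      have "U (s0 + int (Suc k)) x = \<phi> * U (s0 + int (Suc k) - 1) x + \<eta> (s0 + int (Suc k)) x"
        by (rule U_rec) (use elim in simp)
      then show ?case using Suc by (simp add: Ut_Suc)
    qed
  qed
qed

lemma eta_xi: "j \<noteq> s0 \<Longrightarrow> \<eta> j = \<xi> (Inl j)" by (simp add: xi_eq shock_def)
lemma eps_xi: "\<epsilon> j = \<xi> (Inr j)" by (simp add: xi_eq shock_def)
lemma ma_xi: "ma s0 = \<xi> (Inl s0)" by (simp add: xi_eq)

lemma Ut_in_span: "k \<le> n \<Longrightarrow> in_span (Inl ` {s0..s0 + int k}) (Ut k)"
proof (induction k)
  case 0
  have "in_span {Inl s0} (\<xi> (Inl s0))" by (rule in_span_xi) (simp add: window_index_def)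
  then show ?case by (simp add: Ut_0 ma_xi)
next
  case (Suc k)
  have a: "in_span (Inl ` {s0..s0 + int k}) (Ut k)" using Suc by simp
  have b: "in_span {Inl (s0 + int (Suc k))} (\<eta> (s0 + int (Suc k)))"
  proof -
    have "in_span {Inl (s0 + int (Suc k))} (\<xi> (Inl (s0 + int (Suc k))))"
      by (rule in_span_xi) (use Suc.prems in \<open>simp add: window_index_def\<close>)
    moreover have "\<eta> (s0 + int (Suc k)) = \<xi> (Inl (s0 + int (Suc k)))" by (rule eta_xi) simp
    ultimately show ?thesis by simp
  qed
  have "in_span (Inl ` {s0..s0 + int k} \<union> {Inl (s0 + int (Suc k))}) (\<lambda>x. \<phi> * Ut k x + 1 * \<eta> (s0 + int (Suc k)) x)"
    by (rule in_span_add[OF a b])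
  moreover have "(\<lambda>x. \<phi> * Ut k x + 1 * \<eta> (s0 + int (Suc k)) x) = Ut (Suc k)"
    by (simp add: fun_eq_iff Ut_Suc)
  ultimately have "in_span (Inl ` {s0..s0 + int k} \<union> {Inl (s0 + int (Suc k))}) (Ut (Suc k))" by simp
  then show ?case by (rule in_span_mono) auto
qed

lemma eps_in_span: assumes "j \<in> {s0..s0 + int n}" shows "in_span {Inr j} (\<epsilon> j)"
proof -
  have "in_span {Inr j} (\<xi> (Inr j))" by (rule in_span_xi) (use assms in \<open>simp add: window_index_def\<close>)
  then show ?thesis by (simp only: eps_xi)
qed

lemma eta_in_span: assumes "j \<in> {s0<..s0 + int n}" shows "in_span {Inl j} (\<eta> j)"
proof -
  have "in_span {Inl j} (\<xi> (Inl j))" by (rule in_span_xi) (use assms in \<open>auto simp add: window_index_def\<close>)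
  moreover have "\<eta> j = \<xi> (Inl j)" by (rule eta_xi) (use assms in simp)
  ultimately show ?thesis by simp
qed

lemma expectation_Ut_mult_eta: assumes "k \<le> l" "Suc l \<le> n" shows "expectation (\<lambda>x. Ut k x * \<eta> (s0 + int (Suc l)) x) = 0"
proof -
  have "expectation (\<lambda>x. Ut k x * \<xi> (Inl (s0 + int (Suc l))) x) = 0"
    by (rule in_span_orthogonal[OF Ut_in_span]) (use assms in \<open>auto simp: window_index_def\<close>)
  moreover have "\<eta> (s0 + int (Suc l)) = \<xi> (Inl (s0 + int (Suc l)))" by (rule eta_xi) simp
  ultimately show ?thesis by simp
qed

lemma expectation_Ut_mult_eps: assumes "k \<le> n" "j \<in> {s0..s0 + int n}" shows "expectation (\<lambda>x. Ut k x * \<epsilon> j x) = 0"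
proof -
  have "expectation (\<lambda>x. Ut k x * \<xi> (Inr j) x) = 0"
    by (rule in_span_orthogonal[OF Ut_in_span]) (use assms in \<open>auto simp: window_index_def\<close>)
  then show ?thesis by (simp only: eps_xi)
qed

lemma expectation_eps_mult_eps: "i \<in> {s0..s0 + int n} \<Longrightarrow> j \<in> {s0..s0 + int n} \<Longrightarrow>
   expectation (\<lambda>x. \<epsilon> i x * \<epsilon> j x) = (if i = j then s\<epsilon> else 0)"
proof (cases "i = j")
  case True then show ?thesis using eps_moments(2)[of j] by (simp add: power2_eq_square)
next
  case False
  assume ij: "i \<in> {s0..s0 + int n}" "j \<in> {s0..s0 + int n}"
  have "expectation (\<lambda>x. \<epsilon> i x * \<xi> (Inr j) x) = 0"
    by (rule in_span_orthogonal[OF eps_in_span]) (use ij False in \<open>auto simp: window_index_def\<close>)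
  then show ?thesis using False by (simp only: eps_xi) simp
qed

lemma expectation_Ut_square: "k \<le> n \<Longrightarrow> expectation (\<lambda>x. Ut k x * Ut k x) = \<sigma>"
proof (induction k)
  case 0 then show ?case using ma_moments(2)[of s0] by (simp add: Ut_0 \<sigma>_def power2_eq_square)
next
  case (Suc k)
  have kn: "k \<le> n" using Suc by simp
  note U = Ut_in_span[OF kn]
  note E = eta_in_span[of "s0 + int (Suc k)"]
  have E': "in_span {Inl (s0 + int (Suc k))} (\<eta> (s0 + int (Suc k)))" using E Suc.prems by auto
  have e: "(\<lambda>x. Ut (Suc k) x * Ut (Suc k) x) = (\<lambda>x. \<phi>^2 * (Ut k x * Ut k x) + (2 * \<phi>) * (Ut k x * \<eta> (s0 + int (Suc k)) x) + 1 * (\<eta> (s0 + int (Suc k)) x * \<eta> (s0 + int (Suc k)) x))"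
    by (simp add: fun_eq_iff Ut_Suc power2_eq_square algebra_simps)
  have i1: "integrable M (\<lambda>x. Ut k x * Ut k x)" by (rule in_span_integrable_mult[OF U U])
  have i2: "integrable M (\<lambda>x. Ut k x * \<eta> (s0 + int (Suc k)) x)" by (rule in_span_integrable_mult[OF U E'])
  have i3: "integrable M (\<lambda>x. \<eta> (s0 + int (Suc k)) x * \<eta> (s0 + int (Suc k)) x)" by (rule in_span_integrable_mult[OF E' E'])
  have "expectation (\<lambda>x. Ut (Suc k) x * Ut (Suc k) x) = \<phi>^2 * \<sigma> + 2 * \<phi> * 0 + v"
    unfolding e using i1 i2 i3 Suc.IH[OF kn] expectation_Ut_mult_eta[of k k] Suc.prems eta_moments(2)[of "s0 + int (Suc k)"]
    by (simp add: power2_eq_square)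
  also have "\<dots> = \<sigma>"
  proof -
    have "\<phi>^2 < 1" using ph0 ph1 by (simp add: abs_square_less_1)
    then show ?thesis by (simp add: \<sigma>_def field_simps)
  qed
  finally show ?case .
qed

lemma expectation_Ut_mult_shift: "k + d \<le> n \<Longrightarrow> expectation (\<lambda>x. Ut k x * Ut (k + d) x) = \<phi>^d * \<sigma>"
proof (induction d)
  case 0 then show ?case using expectation_Ut_square[of k] by simp
next
  case (Suc d)
  have kd: "k + d \<le> n" using Suc by simp
  have U: "in_span (Inl ` {s0..s0 + int k}) (Ut k)" using Ut_in_span[of k] Suc.prems by simp
  have U2: "in_span (Inl ` {s0..s0 + int (k + d)}) (Ut (k + d))" using Ut_in_span[OF kd] .
  have E': "in_span {Inl (s0 + int (Suc (k + d)))} (\<eta> (s0 + int (Suc (k + d))))" using eta_in_span Suc.prems by auto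
  have "expectation (\<lambda>x. Ut k x * Ut (k + Suc d) x) = expectation (\<lambda>x. Ut k x * (\<phi> * Ut (k + d) x + 1 * \<eta> (s0 + int (Suc (k + d))) x))"
    by (simp add: Ut_Suc)
  also have "\<dots> = \<phi> * expectation (\<lambda>x. Ut k x * Ut (k + d) x) + 1 * expectation (\<lambda>x. Ut k x * \<eta> (s0 + int (Suc (k + d))) x)"
    by (rule expectation_mult_linear[OF in_span_integrable_mult[OF U U2] in_span_integrable_mult[OF U E']])
  also have "\<dots> = \<phi>^(Suc d) * \<sigma>" using Suc.IH[OF kd] expectation_Ut_mult_eta[of k "k + d"] Suc.prems by simp
  finally show ?case .
qed

definition "Y k x = Ut k x + \<epsilon> (s0 + int k) x"

lemma Y_in_span: "k \<le> n \<Longrightarrow> in_span UNIV (Y k)"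
proof -
  assume k: "k \<le> n"
  have "in_span (Inl ` {s0..s0 + int k} \<union> {Inr (s0 + int k)}) (\<lambda>x. 1 * Ut k x + 1 * \<epsilon> (s0 + int k) x)"
    by (rule in_span_add[OF Ut_in_span[OF k] eps_in_span]) (use k in auto)
  moreover have "(\<lambda>x. 1 * Ut k x + 1 * \<epsilon> (s0 + int k) x) = Y k" by (simp add: fun_eq_iff Y_def)
  ultimately have "in_span (Inl ` {s0..s0 + int k} \<union> {Inr (s0 + int k)}) (Y k)" by simp
  then show ?thesis by (rule in_span_mono) simp
qed

lemma expectation_Ut_mult: "k \<le> n \<Longrightarrow> l \<le> n \<Longrightarrow> expectation (\<lambda>x. Ut k x * Ut l x) = \<sigma> * \<phi>^(nat \<bar>int k - int l\<bar>)"
proof (cases "k \<le> l")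
  case True
  assume "l \<le> n"
  then have "expectation (\<lambda>x. Ut k x * Ut (k + (l - k)) x) = \<phi>^(l - k) * \<sigma>" using True by (intro expectation_Ut_mult_shift) auto
  moreover have "nat \<bar>int k - int l\<bar> = l - k" using True by simp
  ultimately show ?thesis using True by simp
next
  case False
  assume "k \<le> n"
  then have "expectation (\<lambda>x. Ut l x * Ut (l + (k - l)) x) = \<phi>^(k - l) * \<sigma>" using False by (intro expectation_Ut_mult_shift) auto
  moreover have "nat \<bar>int k - int l\<bar> = k - l" using False by simp
  ultimately show ?thesis using False by (subst expectation_mult_commute) simp
qed

lemma expectation_Y_mult: assumes "k \<le> n" "l \<le> n"
  shows "expectation (\<lambda>x. Y k x * Y l x) = \<sigma> * \<phi>^(nat \<bar>int k - int l\<bar>) + (if k = l then s\<epsilon> else 0)"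
proof -
  have Uk: "in_span (Inl ` {s0..s0 + int k}) (Ut k)" and Ul: "in_span (Inl ` {s0..s0 + int l}) (Ut l)"
    using Ut_in_span assms by auto
  have ek: "in_span {Inr (s0 + int k)} (\<epsilon> (s0 + int k))" and el: "in_span {Inr (s0 + int l)} (\<epsilon> (s0 + int l))"
    using eps_in_span assms by auto
  have e: "(\<lambda>x. Y k x * Y l x) = (\<lambda>x. Ut k x * Ut l x + Ut k x * \<epsilon> (s0 + int l) x + \<epsilon> (s0 + int k) x * Ut l x + \<epsilon> (s0 + int k) x * \<epsilon> (s0 + int l) x)"
    by (simp add: fun_eq_iff Y_def algebra_simps)
  have "expectation (\<lambda>x. Y k x * Y l x) = expectation (\<lambda>x. Ut k x * Ut l x) + expectation (\<lambda>x. Ut k x * \<epsilon> (s0 + int l) x)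
     + expectation (\<lambda>x. \<epsilon> (s0 + int k) x * Ut l x) + expectation (\<lambda>x. \<epsilon> (s0 + int k) x * \<epsilon> (s0 + int l) x)"
    unfolding e using in_span_integrable_mult[OF Uk Ul] in_span_integrable_mult[OF Uk el] in_span_integrable_mult[OF ek Ul] in_span_integrable_mult[OF ek el]
    by simp
  also have "expectation (\<lambda>x. Ut k x * \<epsilon> (s0 + int l) x) = 0" using assms by (intro expectation_Ut_mult_eps) auto
  also have "expectation (\<lambda>x. \<epsilon> (s0 + int k) x * Ut l x) = 0" using assms by (subst expectation_mult_commute, intro expectation_Ut_mult_eps) auto
  also have "expectation (\<lambda>x. \<epsilon> (s0 + int k) x * \<epsilon> (s0 + int l) x) = (if k = l then s\<epsilon> else 0)"
    using assms by (subst expectation_eps_mult_eps) auto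
  finally show ?thesis using expectation_Ut_mult assms by simp
qed

definition "Ysum x = (\<Sum>k<n. Y k x)"
definition "Ynext x = Y n x"

lemma Ysum_Ynext_moments: "gaussian_moments (\<lambda>x. \<alpha> * Ysum x + \<beta> * Ynext x)"
proof -
  have a: "in_span UNIV Ysum" unfolding Ysum_def[abs_def] by (rule in_span_sum) (auto intro: Y_in_span)
  have b: "in_span UNIV Ynext" unfolding Ynext_def[abs_def] by (rule Y_in_span) simp
  show ?thesis using in_span_moments[OF in_span_add[OF a b]] .
qed

lemma integrable_Y_mult: "k \<le> n \<Longrightarrow> l \<le> n \<Longrightarrow> integrable M (\<lambda>x. Y k x * Y l x)"
  by (rule in_span_integrable_mult[OF Y_in_span Y_in_span])

lemma expectation_Ysum_square: "expectation (\<lambda>x. Ysum x ^ 2) = real n * (\<sigma> + s\<epsilon>) + \<sigma> * (\<Sum>k<n. \<Sum>l\<in>{..<n} - {k}. \<phi>^(nat \<bar>int k - int l\<bar>))"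
proof -
  have "(\<lambda>x. Ysum x ^ 2) = (\<lambda>x. \<Sum>k<n. \<Sum>l<n. Y k x * Y l x)"
    by (simp add: fun_eq_iff Ysum_def power2_eq_square sum_product)
  then have "expectation (\<lambda>x. Ysum x ^ 2) = (\<Sum>k<n. expectation (\<lambda>x. \<Sum>l<n. Y k x * Y l x))"
    by (simp only:) (rule Bochner_Integration.integral_sum, intro Bochner_Integration.integrable_sum integrable_Y_mult, auto)
  also have "\<dots> = (\<Sum>k<n. \<Sum>l<n. expectation (\<lambda>x. Y k x * Y l x))"
    by (intro sum.cong refl Bochner_Integration.integral_sum integrable_Y_mult) auto
  also have "\<dots> = (\<Sum>k<n. \<Sum>l<n. \<sigma> * \<phi>^(nat \<bar>int k - int l\<bar>) + (if k = l then s\<epsilon> else 0))"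
    by (intro sum.cong refl) (simp add: expectation_Y_mult)
  also have "\<dots> = (\<Sum>k<n. (\<sigma> + s\<epsilon>) + \<sigma> * (\<Sum>l\<in>{..<n} - {k}. \<phi>^(nat \<bar>int k - int l\<bar>)))"
  proof (intro sum.cong refl)
    fix k assume k: "k \<in> {..<n}"
    have "(\<Sum>l<n. \<sigma> * \<phi>^(nat \<bar>int k - int l\<bar>) + (if k = l then s\<epsilon> else 0))
      = (\<sigma> * \<phi>^(nat \<bar>int k - int k\<bar>) + (if k = k then s\<epsilon> else 0)) + (\<Sum>l\<in>{..<n} - {k}. \<sigma> * \<phi>^(nat \<bar>int k - int l\<bar>) + (if k = l then s\<epsilon> else 0))"
      using k by (subst sum.remove) auto
    also have "(\<Sum>l\<in>{..<n} - {k}. \<sigma> * \<phi>^(nat \<bar>int k - int l\<bar>) + (if k = l then s\<epsilon> else 0)) = (\<Sum>l\<in>{..<n} - {k}. \<sigma> * \<phi>^(nat \<bar>int k - int l\<bar>))"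
      by (intro sum.cong refl) auto
    finally show "(\<Sum>l<n. \<sigma> * \<phi>^(nat \<bar>int k - int l\<bar>) + (if k = l then s\<epsilon> else 0)) = (\<sigma> + s\<epsilon>) + \<sigma> * (\<Sum>l\<in>{..<n} - {k}. \<phi>^(nat \<bar>int k - int l\<bar>))"
      by (simp add: sum_distrib_left)
  qed
  also have "\<dots> = real n * (\<sigma> + s\<epsilon>) + \<sigma> * (\<Sum>k<n. \<Sum>l\<in>{..<n} - {k}. \<phi>^(nat \<bar>int k - int l\<bar>))"
    by (simp add: sum.distrib sum_distrib_left)
  finally show ?thesis .
qed

lemma expectation_Ysum_Ynext: "expectation (\<lambda>x. Ysum x * Ynext x) = \<sigma> * (\<Sum>k<n. \<phi>^(n - k))"
proof -
  have "(\<lambda>x. Ysum x * Ynext x) = (\<lambda>x. \<Sum>k<n. Y k x * Y n x)"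
    by (simp add: fun_eq_iff Ysum_def Ynext_def sum_distrib_right)
  then have "expectation (\<lambda>x. Ysum x * Ynext x) = (\<Sum>k<n. expectation (\<lambda>x. Y k x * Y n x))"
    by (simp only:) (rule Bochner_Integration.integral_sum, rule integrable_Y_mult, auto)
  also have "\<dots> = (\<Sum>k<n. \<sigma> * \<phi>^(n - k))"
    by (intro sum.cong refl) (simp add: expectation_Y_mult nat_diff_distrib)
  finally show ?thesis by (simp add: sum_distrib_left)
qed

lemma expectation_Ynext_square: "expectation (\<lambda>x. Ynext x ^ 2) = \<sigma> + s\<epsilon>"
  using expectation_Y_mult[of n n] by (simp add: Ynext_def power2_eq_square)

lemma variance_Ysum_Ynext: "variance (\<lambda>x. (a + Ysum x) * (b + Ynext x)) = a^2 * (\<sigma> + s\<epsilon>) + b^2 * expectation (\<lambda>x. Ysum x ^ 2)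
      + 2 * a * b * expectation (\<lambda>x. Ysum x * Ynext x) + expectation (\<lambda>x. Ysum x ^ 2) * (\<sigma> + s\<epsilon>)
      + (expectation (\<lambda>x. Ysum x * Ynext x))^2"
  using variance_gaussian_pair_mult[OF Ysum_Ynext_moments, of a b] expectation_Ynext_square by simp

end

section \<open>The bias of the resampled backtest variance\<close>

lemma A_coef_eq: "real n * A_coef n \<phi> = (\<Sum>k<n. \<phi>^(n - k))" if "n \<ge> 1"
proof -
  have "(\<Sum>k<n. \<phi>^(n - k)) = (\<Sum>k<n. (\<lambda>i. \<phi>^(Suc i)) (n - Suc k))"
    by (intro sum.cong refl) (simp add: Suc_diff_Suc)
  also have "\<dots> = (\<Sum>i<n. \<phi>^(Suc i))" by (rule sum.nat_diff_reindex)
  also have "\<dots> = (\<Sum>k=1..n. \<phi>^k)"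
    by (induction n) auto
  finally show ?thesis using that by (simp add: A_coef_def)
qed

lemma B_coef_eq: "(real n)^2 * B_coef n \<phi> = (\<Sum>k<n. \<Sum>l\<in>{..<n} - {k}. \<phi>^(nat \<bar>int k - int l\<bar>))" if "n \<ge> 1"
proof -
  have e: "{1..n} = Suc ` {..<n}" by (simp add: image_Suc_lessThan)
  have "(\<Sum>i=1..n. \<Sum>j\<in>{1..n} - {i}. \<phi> ^ (nat \<bar>int i - int j\<bar>))
     = (\<Sum>k<n. \<Sum>j\<in>{1..n} - {Suc k}. \<phi> ^ (nat \<bar>int (Suc k) - int j\<bar>))"
    unfolding e by (subst sum.reindex) auto
  also have "\<dots> = (\<Sum>k<n. \<Sum>l\<in>{..<n} - {k}. \<phi>^(nat \<bar>int k - int l\<bar>))"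
  proof (rule sum.cong[OF refl])
    fix k assume "k \<in> {..<n}"
    have "{1..n} - {Suc k} = Suc ` ({..<n} - {k})" unfolding e by (simp add: image_set_diff)
    then show "(\<Sum>j\<in>{1..n} - {Suc k}. \<phi> ^ (nat \<bar>int (Suc k) - int j\<bar>)) = (\<Sum>l\<in>{..<n} - {k}. \<phi>^(nat \<bar>int k - int l\<bar>))"
      by (simp add: sum.reindex)
  qed
  finally show ?thesis using that by (simp add: B_coef_def)
qed

lemma A_coef_bounds: assumes "0 \<le> \<phi>" "\<phi> < 1" "n \<ge> 1" shows "0 \<le> A_coef n \<phi>" "A_coef n \<phi> \<le> \<phi>"
proof -
  show "0 \<le> A_coef n \<phi>" using assms by (simp add: A_coef_def sum_nonneg)
  have "(\<Sum>k=1..n. \<phi>^k) \<le> (\<Sum>k=1..n. \<phi>)"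
    by (intro sum_mono) (use assms in \<open>auto intro: power_le_one power_decreasing[of 1, simplified]\<close>)
  then show "A_coef n \<phi> \<le> \<phi>" using assms by (simp add: A_coef_def field_simps)
qed

lemma B_coef_bounds: assumes "0 \<le> \<phi>" "\<phi> < 1" "n \<ge> 1" shows "0 \<le> B_coef n \<phi>" "B_coef n \<phi> \<le> \<phi>"
proof -
  show "0 \<le> B_coef n \<phi>" using assms by (simp add: B_coef_def sum_nonneg)
  have "(\<Sum>i=1..n. \<Sum>j\<in>{1..n} - {i}. \<phi> ^ (nat \<bar>int i - int j\<bar>)) \<le> (\<Sum>i=1..n. \<Sum>j\<in>{1..n} - {i}. \<phi>)"
  proof (intro sum_mono)
    fix i j assume "j \<in> {1..n} - {i}"
    then have "nat \<bar>int i - int j\<bar> \<ge> 1" by auto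
    then show "\<phi> ^ (nat \<bar>int i - int j\<bar>) \<le> \<phi>" using assms power_decreasing[of 1 "nat \<bar>int i - int j\<bar>" \<phi>] by simp
  qed
  also have "\<dots> \<le> (\<Sum>i=1..n. real n * \<phi>)"
  proof (intro sum_mono)
    fix i
    have "card ({1..n} - {i}) \<le> card {1..n}" by (rule card_mono) auto
    then have "real (card ({1..n} - {i})) \<le> real n" by simp
    then show "(\<Sum>j\<in>{1..n} - {i}. \<phi>) \<le> real n * \<phi>" using assms by (simp add: mult_right_mono)
  qed
  also have "\<dots> = (real n)^2 * \<phi>" by (simp add: power2_eq_square)
  finally show "B_coef n \<phi> \<le> \<phi>" using assms by (simp add: B_coef_def field_simps)
qed

lemma sum_window_reindex:
  "(\<Sum>i\<in>{t - int n + 1..t}. f i) = (\<Sum>k<n. f (t - int n + 1 + int k))"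
proof -
  have "{t - int n + 1..t} = (\<lambda>k. t - int n + 1 + int k) ` {..<n}"
  proof safe
    fix i assume "i \<in> {t - int n + 1..t}"
    then have "i = t - int n + 1 + int (nat (i - (t - int n + 1)))" "nat (i - (t - int n + 1)) < n"
      by auto
    then show "i \<in> (\<lambda>k. t - int n + 1 + int k) ` {..<n}" by blast
  qed auto
  then show ?thesis by (simp add: sum.reindex inj_on_def)
qed

context window_model begin

lemma Y_measurable[measurable]: "Y k \<in> borel_measurable M"
  unfolding Y_def[abs_def] by measurable

lemma AE_returns_eq: "AE x in M. \<forall>k. \<mu>t (s0 + int k) x + \<epsilon> (s0 + int k) x = mu_bar + Y k x"
  using AE_U_eq_Ut
proof eventually_elim
  case (elim x)
  show ?case
  proof
    fix k
    have "U (s0 + int k) x = Ut k x" using elim by blast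
    then show "\<mu>t (s0 + int k) x + \<epsilon> (s0 + int k) x = mu_bar + Y k x"
      unfolding U_def Y_def by simp
  qed
qed

lemma AE_port_ret_eq:
  "AE x in M. port_ret n \<gamma> sR2 (\<lambda>s x. \<mu>t s x + \<epsilon> s x) (s0 + int n - 1) x
      = (1 / (real n * \<gamma> * sR2)) * ((real n * mu_bar + Ysum x) * (mu_bar + Ynext x))"
  using AE_returns_eq
proof eventually_elim
  case (elim x)
  have "(\<Sum>i\<in>{s0 + int n - 1 - int n + 1..s0 + int n - 1}. \<mu>t i x + \<epsilon> i x)
      = (\<Sum>k<n. mu_bar + Y k x)"
    unfolding sum_window_reindex using elim by simp
  also have "\<dots> = real n * mu_bar + Ysum x" by (simp add: Ysum_def sum.distrib)
  finally have s: "(\<Sum>i\<in>{s0 + int n - 1 - int n + 1..s0 + int n - 1}. \<mu>t i x + \<epsilon> i x)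
      = real n * mu_bar + Ysum x" .
  have r: "\<mu>t (s0 + int n - 1 + 1) x + \<epsilon> (s0 + int n - 1 + 1) x = mu_bar + Ynext x"
    using elim[rule_format, of n] by (simp add: Ynext_def)
  show ?case unfolding port_ret_def roll_mean_def s r by (simp add: field_simps)
qed

lemma variance_port_ret:
  assumes "n \<ge> 1"
  defines "EA2 \<equiv> real n * (\<sigma> + s\<epsilon>) + \<sigma> * ((real n)^2 * B_coef n \<phi>)"
    and "EAB \<equiv> \<sigma> * (real n * A_coef n \<phi>)"
  shows "variance (port_ret n \<gamma> sR2 (\<lambda>s x. \<mu>t s x + \<epsilon> s x) (s0 + int n - 1))
    = (1 / (real n * \<gamma> * sR2))^2 * ((real n * mu_bar)^2 * (\<sigma> + s\<epsilon>) + mu_bar^2 * EA2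
      + 2 * (real n * mu_bar) * mu_bar * EAB + EA2 * (\<sigma> + s\<epsilon>) + EAB^2)"
proof -
  have "port_ret n \<gamma> sR2 (\<lambda>s x. \<mu>t s x + \<epsilon> s x) (s0 + int n - 1) \<in> borel_measurable M"
    unfolding port_ret_def[abs_def] roll_mean_def
    by (intro borel_measurable_times borel_measurable_divide borel_measurable_sum
        borel_measurable_add borel_measurable_const mu_measurable eps_measurable)
  moreover have "(\<lambda>x. (1 / (real n * \<gamma> * sR2)) * ((real n * mu_bar + Ysum x) * (mu_bar + Ynext x)))
      \<in> borel_measurable M"
    unfolding Ysum_def Ynext_def
    by (intro borel_measurable_times borel_measurable_sum borel_measurable_add
        borel_measurable_const Y_measurable)
  ultimately have "variance (port_ret n \<gamma> sR2 (\<lambda>s x. \<mu>t s x + \<epsilon> s x) (s0 + int n - 1))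
     = variance (\<lambda>x. (1 / (real n * \<gamma> * sR2)) * ((real n * mu_bar + Ysum x) * (mu_bar + Ynext x)))"
    by (rule variance_cong_AE[OF _ _ AE_port_ret_eq])
  also have "\<dots> = (1 / (real n * \<gamma> * sR2))^2 * variance (\<lambda>x. (real n * mu_bar + Ysum x) * (mu_bar + Ynext x))"
    by (rule variance_cmult)
  also have "variance (\<lambda>x. (real n * mu_bar + Ysum x) * (mu_bar + Ynext x))
      = (real n * mu_bar)^2 * (\<sigma> + s\<epsilon>) + mu_bar^2 * EA2 + 2 * (real n * mu_bar) * mu_bar * EAB
        + EA2 * (\<sigma> + s\<epsilon>) + EAB^2"
  proof -
    have "expectation (\<lambda>x. Ysum x ^ 2) = EA2"
      using expectation_Ysum_square B_coef_eq[OF assms(1), of \<phi>] by (simp add: EA2_def)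
    moreover have "expectation (\<lambda>x. Ysum x * Ynext x) = EAB"
      using expectation_Ysum_Ynext A_coef_eq[OF assms(1), of \<phi>] by (simp add: EAB_def)
    ultimately show ?thesis by (simp only: variance_Ysum_Ynext)
  qed
  finally show ?thesis .
qed

lemma corr_returns:
  assumes "n \<ge> 1" and pos: "\<sigma> + s\<epsilon> > 0"
  shows "corr M (\<lambda>x. \<mu>t (s0 + int n - 1) x + \<epsilon> (s0 + int n - 1) x)
                (\<lambda>x. \<mu>t (s0 + int n - 1 + 1) x + \<epsilon> (s0 + int n - 1 + 1) x) = \<sigma> * \<phi> / (\<sigma> + s\<epsilon>)"
proof -
  obtain k where n: "n = Suc k" using assms(1) by (cases n) auto
  have t: "s0 + int n - 1 = s0 + int k" "s0 + int k + 1 = s0 + int n" by (simp_all add: n)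
  have span: "in_span UNIV (Y k)" "in_span UNIV (Y n)" using Y_in_span n by auto
  have centred: "integrable M (Y j)" "expectation (Y j) = 0" if "in_span UNIV (Y j)" for j
    using gaussian_moments_integrable_power[OF in_span_moments[OF that], of 1] in_span_moments[OF that]
    by (simp_all add: gaussian_moments_def)
  have "corr M (\<lambda>x. \<mu>t (s0 + int k) x + \<epsilon> (s0 + int k) x) (\<lambda>x. \<mu>t (s0 + int n) x + \<epsilon> (s0 + int n) x)
      = expectation (\<lambda>x. Y k x * Y n x) / sqrt (expectation (\<lambda>x. Y k x * Y k x) * expectation (\<lambda>x. Y n x * Y n x))"
    by (rule corr_AE_affine[where a=mu_bar and b=mu_bar])
      (use AE_returns_eq centred[OF span(1)] centred[OF span(2)] span in
        \<open>auto intro: in_span_integrable_mult elim: eventually_mono\<close>)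
  also have "\<dots> = \<sigma> * \<phi> / (\<sigma> + s\<epsilon>)"
    using expectation_Y_mult[of k n] expectation_Y_mult[of k k] expectation_Y_mult[of n n] pos
    by (simp add: n)
  finally show ?thesis unfolding t .
qed

end

context prob_space begin

lemma variance_iid_window_mult:
  fixes Rs :: "int \<Rightarrow> 'a \<Rightarrow> real"
  assumes ind: "indep_vars (\<lambda>_. borel) Rs UNIV" and g: "\<And>s. gaussian_rv M (Rs s) m w"
  shows "variance (\<lambda>x. (real n * m + (\<Sum>k<n. Rs (s0 + int k) x - m)) * (m + (Rs (s0 + int n) x - m)))
       = (real n * m)^2 * w + m^2 * (real n * w) + real n * w * w"
proof -
  define \<xi> where "\<xi> k x = Rs (s0 + int k) x - m" for k x
  have ind1: "indep_vars (\<lambda>_. borel) (\<lambda>k. Rs (s0 + int k)) (UNIV :: nat set)"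
    by (rule indep_vars_reindex[OF ind]) (auto simp: inj_on_def)
  have indx: "indep_vars (\<lambda>_. borel) \<xi> {..n}"
    using indep_vars_subset[OF indep_vars_compose2[OF ind1, of "\<lambda>_ y. y - m" "\<lambda>_. borel"]]
    by (auto simp: \<xi>_def[abs_def])
  have gx: "gaussian_moments (\<xi> k)" for k using gaussian_rv_gaussian_moments(1)[OF g] by (simp add: \<xi>_def[abs_def])
  have vx: "expectation (\<lambda>x. \<xi> k x ^ 2) = w" for k using gaussian_rv_gaussian_moments(2)[OF g] by (simp add: \<xi>_def)
  define c where "c k = (if k < n then 1 else 0::real)" for k
  define d where "d k = (if k = n then 1 else 0::real)" for k
  define A where "A x = (\<Sum>k\<in>{..n}. c k * \<xi> k x)" for x
  define B where "B x = (\<Sum>k\<in>{..n}. d k * \<xi> k x)" for x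
  have sAt: "(\<Sum>k\<in>{..n}. f k) = (\<Sum>k<n. f k) + f n" for f :: "nat \<Rightarrow> real"
    by (simp add: lessThan_Suc_atMost[symmetric])
  have Ae: "A x = (\<Sum>k<n. Rs (s0 + int k) x - m)" for x
    unfolding A_def sAt by (simp add: c_def \<xi>_def)
  have Be: "B x = Rs (s0 + int n) x - m" for x
    unfolding B_def sAt by (simp add: d_def \<xi>_def)
  have G: "gaussian_moments (\<lambda>x. \<alpha> * A x + \<beta> * B x)" for \<alpha> \<beta>
  proof -
    have "gaussian_moments (\<lambda>x. \<Sum>k\<in>{..n}. (\<alpha> * c k + \<beta> * d k) * \<xi> k x)" by (rule gaussian_moments_sum[OF _ indx gx]) simp
    moreover have "(\<lambda>x. \<Sum>k\<in>{..n}. (\<alpha> * c k + \<beta> * d k) * \<xi> k x) = (\<lambda>x. \<alpha> * A x + \<beta> * B x)"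
      by (simp add: fun_eq_iff A_def B_def sum_distrib_left sum.distrib algebra_simps)
    ultimately show ?thesis by simp
  qed
  have expectation_Ysum_square: "expectation (\<lambda>x. A x ^ 2) = real n * w"
  proof -
    have "expectation (\<lambda>x. A x * A x) = (\<Sum>k\<in>{..n}. c k * c k * expectation (\<lambda>x. \<xi> k x ^ 2))"
      unfolding A_def by (rule expectation_indep_sum_mult[OF _ indx gx]) simp
    also have "\<dots> = real n * w" unfolding sAt by (simp add: c_def vx)
    finally show ?thesis by (simp add: power2_eq_square)
  qed
  have expectation_Ynext_square: "expectation (\<lambda>x. B x ^ 2) = w"
  proof -
    have "expectation (\<lambda>x. B x * B x) = (\<Sum>k\<in>{..n}. d k * d k * expectation (\<lambda>x. \<xi> k x ^ 2))"
      unfolding B_def by (rule expectation_indep_sum_mult[OF _ indx gx]) simp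
    also have "\<dots> = w" unfolding sAt by (simp add: d_def vx)
    finally show ?thesis by (simp add: power2_eq_square)
  qed
  have expectation_Ysum_Ynext: "expectation (\<lambda>x. A x * B x) = 0"
  proof -
    have "expectation (\<lambda>x. A x * B x) = (\<Sum>k\<in>{..n}. c k * d k * expectation (\<lambda>x. \<xi> k x ^ 2))"
      unfolding A_def B_def by (rule expectation_indep_sum_mult[OF _ indx gx]) simp
    also have "\<dots> = 0" unfolding sAt by (simp add: c_def d_def)
    finally show ?thesis .
  qed
  have "variance (\<lambda>x. (real n * m + A x) * (m + B x)) = (real n * m)^2 * w + m^2 * (real n * w) + real n * w * w"
    using variance_gaussian_pair_mult[OF G, of "real n * m" m] expectation_Ysum_square expectation_Ynext_square expectation_Ysum_Ynext by (simp add: power2_eq_square)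
  then show ?thesis by (simp add: Ae Be)
qed

lemma variance_port_ret_iid:
  fixes Rs :: "int \<Rightarrow> 'a \<Rightarrow> real"
  assumes ind: "indep_vars (\<lambda>_. borel) Rs UNIV" and g: "\<And>s. gaussian_rv M (Rs s) m w"
  shows "variance (port_ret n \<gamma> sR2 Rs t)
    = (1 / (real n * \<gamma> * sR2))^2 * ((real n * m)^2 * w + m^2 * (real n * w) + real n * w * w)"
proof -
  define s0 where "s0 = t - int n + 1"
  have "port_ret n \<gamma> sR2 Rs t = (\<lambda>x. (1 / (real n * \<gamma> * sR2)) *
      ((real n * m + (\<Sum>k<n. Rs (s0 + int k) x - m)) * (m + (Rs (s0 + int n) x - m))))"
  proof
    fix x
    have "(\<Sum>i\<in>{t - int n + 1..t}. Rs i x) = real n * m + (\<Sum>k<n. Rs (s0 + int k) x - m)"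
      by (simp add: sum_window_reindex sum_subtractf s0_def)
    moreover have "t + 1 = s0 + int n" by (simp add: s0_def)
    ultimately show "port_ret n \<gamma> sR2 Rs t x = (1 / (real n * \<gamma> * sR2)) *
        ((real n * m + (\<Sum>k<n. Rs (s0 + int k) x - m)) * (m + (Rs (s0 + int n) x - m)))"
      unfolding port_ret_def roll_mean_def by (simp add: field_simps)
  qed
  then show ?thesis
    by (simp only: variance_cmult variance_iid_window_mult[OF ind g])
qed

end

lemma bias_formula_and_bounds:
  fixes N \<gamma> sR2 \<sigma> m Ac Bc \<phi> :: real
  assumes N: "N > 0" and g: "\<gamma> > 0" and sR: "sR2 > 0" and s0: "0 \<le> \<sigma>"
    and A0: "0 \<le> Ac" "Ac \<le> \<phi>" and B0: "0 \<le> Bc" "Bc \<le> \<phi>"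
  defines "c \<equiv> 1 / (N * \<gamma> * sR2)"
  defines "EA2 \<equiv> N * sR2 + \<sigma> * (N^2 * Bc)"
  defines "EAB \<equiv> \<sigma> * (N * Ac)"
  defines "\<theta> \<equiv> m / sqrt sR2"
  defines "\<psi> \<equiv> \<sigma> * \<phi> / sR2"
  defines "bias \<equiv> c^2 * ((N * m)^2 * sR2 + m^2 * (N * sR2) + N * sR2 * sR2)
      - c^2 * ((N * m)^2 * sR2 + m^2 * EA2 + 2 * (N * m) * m * EAB + EA2 * sR2 + EAB^2)"
  shows "bias = - (1 / \<gamma>\<^sup>2) * ((\<theta>\<^sup>2 + 1) * (\<sigma> / sR2) * Bc + (\<sigma> / sR2) * Ac * ((\<sigma> / sR2) * Ac + 2 * \<theta>\<^sup>2))
      \<and> - ((3 * \<theta>\<^sup>2 + \<psi> + 1) / \<gamma>\<^sup>2) * \<psi> \<le> bias \<and> bias \<le> 0"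
proof -
  have th: "\<theta>^2 = m^2 / sR2" using sR by (simp add: \<theta>_def power_divide)
  define r where "r = \<sigma> / sR2"
  have r0: "0 \<le> r" using s0 sR by (simp add: r_def)
  have eq: "bias = - (1 / \<gamma>\<^sup>2) * ((\<theta>\<^sup>2 + 1) * r * Bc + r * Ac * (r * Ac + 2 * \<theta>\<^sup>2))"
    unfolding bias_def c_def EA2_def EAB_def th r_def using N g sR
    by (simp add: field_simps power2_eq_square)
  define K where "K = (\<theta>\<^sup>2 + 1) * r * Bc + r * Ac * (r * Ac + 2 * \<theta>\<^sup>2)"
  have t0: "0 \<le> \<theta>^2" by simp
  have K0: "0 \<le> K" unfolding K_def using r0 A0 B0 t0 by (intro add_nonneg_nonneg mult_nonneg_nonneg) auto
  have KC: "K \<le> (3 * \<theta>\<^sup>2 + \<psi> + 1) * \<psi>"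
  proof -
    have "(\<theta>\<^sup>2 + 1) * r * Bc \<le> (\<theta>\<^sup>2 + 1) * r * \<phi>" using r0 t0 B0 by (intro mult_left_mono) auto
    moreover have "r * Ac * (r * Ac + 2 * \<theta>\<^sup>2) \<le> r * \<phi> * (r * \<phi> + 2 * \<theta>\<^sup>2)"
      using r0 t0 A0 by (intro mult_mono add_mono mult_left_mono) auto
    moreover have "\<psi> = r * \<phi>" by (simp add: \<psi>_def r_def)
    ultimately show ?thesis unfolding K_def by (simp add: algebra_simps power2_eq_square)
  qed
  have g2: "0 < 1 / \<gamma>\<^sup>2" using g by simp
  show ?thesis
  proof (intro conjI)
    show "bias = - (1 / \<gamma>\<^sup>2) * ((\<theta>\<^sup>2 + 1) * (\<sigma> / sR2) * Bc + (\<sigma> / sR2) * Ac * ((\<sigma> / sR2) * Ac + 2 * \<theta>\<^sup>2))"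
      using eq by (simp add: r_def)
    show "- ((3 * \<theta>\<^sup>2 + \<psi> + 1) / \<gamma>\<^sup>2) * \<psi> \<le> bias"
    proof -
      have "(1 / \<gamma>\<^sup>2) * K \<le> (1 / \<gamma>\<^sup>2) * ((3 * \<theta>\<^sup>2 + \<psi> + 1) * \<psi>)" using KC g2 by (intro mult_left_mono) auto
      moreover have bK: "bias = - ((1 / \<gamma>\<^sup>2) * K)" using eq unfolding K_def by simp
      moreover have "- ((3 * \<theta>\<^sup>2 + \<psi> + 1) / \<gamma>\<^sup>2) * \<psi> = - ((1 / \<gamma>\<^sup>2) * ((3 * \<theta>\<^sup>2 + \<psi> + 1) * \<psi>))"
        by (simp add: field_simps)
      ultimately show ?thesis by linarith
    qed
    have bK: "bias = - ((1 / \<gamma>\<^sup>2) * K)" using eq unfolding K_def by simp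
    show "bias \<le> 0" unfolding bK using K0 g2 by simp
  qed
qed

theorem proposition2:
  fixes M :: "'a measure"
    and \<eta> \<epsilon> \<mu>t Rs :: "int \<Rightarrow> 'a \<Rightarrow> real"
    and \<phi> \<mu>0 s\<eta>2 s\<epsilon>2 \<gamma> :: real
    and n :: nat and t :: int
  assumes P: "prob_space M"
    and phi: "0 \<le> \<phi>" "\<phi> < 1"
    and s_eta: "s\<eta>2 \<ge> 0" and s_eps: "s\<epsilon>2 > 0"
    and n: "n \<ge> 1" and gam: "\<gamma> > 0"
    \<comment> \<open>(eta_t) iid N(0, s_eta^2), (eps_t) iid N(0, s_eps^2), the two families mutually independent\<close>
    and indep: "prob_space.indep_vars M (\<lambda>_. borel)
                  (\<lambda>i. case i of Inl s \<Rightarrow> \<eta> s | Inr s \<Rightarrow> \<epsilon> s) UNIV"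
    and eta_dist: "\<And>s. gaussian_rv M (\<eta> s) 0 s\<eta>2"
    and eps_dist: "\<And>s. gaussian_rv M (\<epsilon> s) 0 s\<epsilon>2"
    \<comment> \<open>(mu_t) is a (strictly) stationary solution of mu_t = mu_0 + phi mu_{t-1} + eta_t\<close>
    and mu_rv: "\<And>s. \<mu>t s \<in> borel_measurable M"
    and mu_rec: "\<And>s x. x \<in> space M \<Longrightarrow> \<mu>t s x = \<mu>0 + \<phi> * \<mu>t (s - 1) x + \<eta> s x"
    and mu_stat: "\<And>h. distr M (PiM UNIV (\<lambda>_. borel)) (\<lambda>x s. \<mu>t (s + h) x)
                      = distr M (PiM UNIV (\<lambda>_. borel)) (\<lambda>x s. \<mu>t s x)"
    \<comment> \<open>IID-resampled returns with the marginal law N(mu, sigma_R^2) of R_t\<close>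
    and Rs_indep: "prob_space.indep_vars M (\<lambda>_. borel) Rs UNIV"
    and Rs_dist: "\<And>s. gaussian_rv M (Rs s) (\<mu>0 / (1 - \<phi>)) (s\<eta>2 / (1 - \<phi>\<^sup>2) + s\<epsilon>2)"
  shows
    "let R = (\<lambda>s x. \<mu>t s x + \<epsilon> s x);
         s\<mu>2 = s\<eta>2 / (1 - \<phi>\<^sup>2);
         sR2 = s\<mu>2 + s\<epsilon>2;
         m = \<mu>0 / (1 - \<phi>);
         \<theta> = m / sqrt sR2;
         \<psi> = corr M (R t) (R (t + 1));
         bias = prob_space.variance M (port_ret n \<gamma> sR2 Rs t)
                - prob_space.variance M (port_ret n \<gamma> sR2 R t);
         C = 3 * \<theta>\<^sup>2 + \<psi> + 1
     in bias = - (1 / \<gamma>\<^sup>2) * ((\<theta>\<^sup>2 + 1) * (s\<mu>2 / sR2) * B_coef n \<phi>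
                 + (s\<mu>2 / sR2) * A_coef n \<phi> * ((s\<mu>2 / sR2) * A_coef n \<phi> + 2 * \<theta>\<^sup>2))
      \<and> - (C / \<gamma>\<^sup>2) * \<psi> \<le> bias \<and> bias \<le> 0"
proof -
  interpret prob_space M by (rule P)
  define s0 where "s0 = t - int n + 1"
  interpret window_model M \<eta> \<phi> s\<eta>2 \<mu>t \<mu>0 \<epsilon> s\<epsilon>2 s0 n
    using indep_vars_reindex[OF indep, of Inl UNIV]
    by unfold_locales (auto intro: eta_dist mu_rv mu_rec mu_stat indep eps_dist simp: phi)
  have t: "t = s0 + int n - 1" by (simp add: s0_def)
  have \<sigma>: "s\<eta>2 / (1 - \<phi>\<^sup>2) = \<sigma>" by (simp add: \<sigma>_def)
  have "\<phi>\<^sup>2 < 1" using phi by (simp add: abs_square_less_1)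
  then have "0 \<le> \<sigma>" using s_eta by (simp add: \<sigma>_def)
  then have pos: "0 < \<sigma> + s\<epsilon>2" using s_eps by linarith
  have "0 < real n" using n by simp
  note bias = bias_formula_and_bounds[OF \<open>0 < real n\<close> gam pos \<open>0 \<le> \<sigma>\<close>
      A_coef_bounds[OF phi n] B_coef_bounds[OF phi n], of mu_bar]
  show ?thesis
    unfolding Let_def \<sigma> t mu_bar_def[symmetric] corr_returns[OF n pos]
      variance_port_ret[OF n] variance_port_ret_iid[OF Rs_indep Rs_dist]
    using bias by simp
qed

end
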